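(* For every integer $n\ge0$, $A_3(n)=C_{3,3}(n)$, where $A_3(n)$ is the number of partitions $\lambda$ of $n$ for which there exists an integer $j\ge 0$ such that $m_{2i-1}(\lambda)=2$ for every $1\le i\le j$ and every part of $\lambda$ greater than $2j$ has multiplicity at most $1$ (i.e., if $2j-1$ is the largest repeated odd part, then all positive odd integers less than $2j$ appear exactly twice and no part greater than $2j$ is repeated; even parts at most $2j$ are unrestricted), and $C_{3,3}(n)$ is the number of partitions of $n$ into parts $\not\equiv 0,\pm3\pmod 7$.
   Context: $m_j(\lambda)$ denotes the number of times $j$ appears as a part of the partition $\lambda$. *)

theory Defs
  imports Main "HOL-Library.Multiset"
begin

definition partitions :: "nat \<Rightarrow> nat multiset set" where
  "partitions n = {p. (\<forall>x\<in>#p. 0 < x) \<and> sum_mset p = n}"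

definition A3_cond :: "nat multiset \<Rightarrow> bool" where
  "A3_cond p \<longleftrightarrow> (\<exists>j::nat. (\<forall>i. 1 \<le> i \<and> i \<le> j \<longrightarrow> count p (2*i - 1) = 2)
                           \<and> (\<forall>k. k > 2*j \<longrightarrow> count p k \<le> 1))"

definition A3 :: "nat \<Rightarrow> nat" where
  "A3 n = card {p \<in> partitions n. A3_cond p}"

definition C33 :: "nat \<Rightarrow> nat" where
  "C33 n = card {p \<in> partitions n. \<forall>x\<in>#p. x mod 7 \<notin> {0, 3, 4}}"

end

theory Submission
  imports Defs "HOL-Computational_Algebra.Formal_Laurent_Series" "HOL-Library.Groups_Big_Fun"
begin

(* Grouping the partitions counted by A_3(n) according to j gives the generating function
   (-q;q)_\<infinity> \<Sum>_j q^(2j^2) (q;q^2)_j / (q^2;q^2)_(2j), while C_{3,3}(n) has generating function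
   (q^3,q^4,q^7;q^7)_\<infinity> / (q;q)_\<infinity>.  Their equality is a Rogers-Selberg type identity, proved
   with Bailey's lemma: the finite identity (q;q^2)_j = \<Sum>_r (-1)^r q^((3r^2-r)/2) [2j, j+r]_(q^2) is
   inserted into the sum, Bailey's key summation turns the result into
   (q^2;q^2)_N / (q^2;q^2)_(2N) \<Sum>_r (-1)^r q^((7r^2-r)/2) [2N, N+r]_(q^2), and the finite Jacobi triple
   product evaluates the theta series.  All computations use finite sums and products in the field
   of formal Laurent series; for N = 2n every truncation agrees with its limit below q^(n+1), which is
   enough to compare the n-th coefficients. *)

section \<open>q-Pochhammer symbols and Gaussian binomial coefficients\<close>

(* Keep integer powers of fls_X as powers instead of rewriting them to shifts. *)
declare fls_X_power_int [simp del]

lemma fls_X_power_eq_1_iff [simp]: "(fls_X :: 'a :: field fls) ^ k = 1 \<longleftrightarrow> k = 0"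
proof
  assume "fls_X ^ k = (1 :: 'a fls)"
  then have "fls_nth (fls_X ^ k :: 'a fls) 0 = fls_nth 1 0" by simp
  then show "k = 0" by (simp split: if_splits)
qed simp

definition qpoch :: "nat \<Rightarrow> nat \<Rightarrow> 'a :: field fls" where
  "qpoch e L = (\<Prod>i=1..L. 1 - fls_X ^ (e * i))"

lemma qpoch_0 [simp]: "qpoch e 0 = 1"
  by (simp add: qpoch_def)

lemma qpoch_Suc: "qpoch e (Suc L) = qpoch e L * (1 - fls_X ^ (e * Suc L))"
  by (simp add: qpoch_def prod.cl_ivl_Suc)

lemma qpoch_nonzero: "0 < e \<Longrightarrow> qpoch e L \<noteq> 0"
  by (induction L) (auto simp: qpoch_Suc)

definition qbinom :: "nat \<Rightarrow> nat \<Rightarrow> int \<Rightarrow> 'a :: field fls" where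
  "qbinom e m k =
     (if 0 \<le> k \<and> k \<le> int m then qpoch e m / (qpoch e (nat k) * qpoch e (m - nat k)) else 0)"

lemma qbinom_nonzeroD: "qbinom e m k \<noteq> 0 \<Longrightarrow> 0 \<le> k \<and> k \<le> int m"
  by (simp add: qbinom_def split: if_splits)

lemma qbinom_of_nat: "k \<le> m \<Longrightarrow> qbinom e m (int k) = qpoch e m / (qpoch e k * qpoch e (m - k))"
  by (simp add: qbinom_def)

lemma qbinom_symmetric: "qbinom e m (int m - k) = qbinom e m k"
proof (cases "0 \<le> k \<and> k \<le> int m")
  case True
  then have "nat (int m - k) = m - nat k" "m - (m - nat k) = nat k" by auto
  with True show ?thesis by (simp add: qbinom_def mult.commute)
qed (auto simp: qbinom_def)

lemma qbinom_pascal: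
  assumes e: "0 < e"
  shows "qbinom e (Suc m) k = qbinom e m (k - 1) + fls_X powi (int e * k) * qbinom e m k"
proof -
  have ne: "qpoch e a \<noteq> (0 :: 'a fls)" for a using qpoch_nonzero[OF e] .
  consider "k < 0" | "k = 0" | "1 \<le> k \<and> k \<le> int m" | "k = int m + 1" | "k > int m + 1" by linarith
  then show ?thesis
  proof cases
    case 3
    define j l where "j = nat k - 1" and "l = m - nat k"
    have k: "nat k = Suc j" "nat (k - 1) = j" "m = Suc j + l" "Suc m - nat k = Suc l"
      "m - j = Suc l" "m - nat k = l" using 3 by (auto simp: j_def l_def)
    have "k = int (Suc j)"
      using 3 by (simp add: j_def)
    then have power: "fls_X powi (int e * k) = (fls_X ^ (e * Suc j) :: 'a fls)"
      by (simp only: of_nat_mult [symmetric] power_int_of_nat)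
    have split: "1 - fls_X ^ (e * Suc m) =
        (1 - fls_X ^ (e * Suc j)) + fls_X ^ (e * Suc j) * (1 - (fls_X ^ (e * Suc l) :: 'a fls))"
      by (simp add: k(3) algebra_simps flip: power_add)
    have units: "1 - fls_X ^ (e * Suc j) \<noteq> (0 :: 'a fls)" "1 - fls_X ^ (e * Suc l) \<noteq> (0 :: 'a fls)"
      using e by auto
    have field: "Pm * w / (Pj * u * (Pl * v)) = Pm / (Pj * (Pl * v)) + x * (Pm / (Pj * u * Pl))"
      if "Pj \<noteq> 0" "Pl \<noteq> 0" "u \<noteq> 0" "v \<noteq> 0" "w = u + x * v" for Pm Pj Pl u v w x :: "'a fls"
      using that by (simp add: field_simps)
    have b1: "qbinom e (Suc m) k = qpoch e (Suc m) / (qpoch e (Suc j) * qpoch e (Suc l))"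
      using 3 k(1,4) by (simp add: qbinom_def)
    have b2: "qbinom e m (k - 1) = qpoch e m / (qpoch e j * qpoch e (Suc l))"
      using 3 k(2,5) by (simp add: qbinom_def)
    have b3: "qbinom e m k = qpoch e m / (qpoch e (Suc j) * qpoch e l)"
      using 3 k(1,6) by (simp add: qbinom_def)
    show ?thesis
      unfolding b1 b2 b3 power qpoch_Suc[of e m] qpoch_Suc[of e j] qpoch_Suc[of e l]
      by (rule field) (use ne units split in auto)
  qed (use ne in \<open>simp_all add: qbinom_def nat_add_distrib\<close>)
qed

lemma qbinom_pascal':
  assumes "0 < e"
  shows "qbinom e (Suc m) k = fls_X powi (int e * (int m + 1 - k)) * qbinom e m (k - 1) + qbinom e m k"
proof -
  have "qbinom e (Suc m) k = qbinom e (Suc m) (int (Suc m) - k)"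
    by (simp only: qbinom_symmetric)
  also have "\<dots> = qbinom e m (int m - k) + fls_X powi (int e * (int m + 1 - k)) * qbinom e m (int m - (k - 1))"
    by (subst qbinom_pascal[OF assms]) (simp add: algebra_simps)
  finally show ?thesis
    by (simp only: qbinom_symmetric add.commute)
qed

lemma finite_nonzero_int_bounded:
  "(\<And>r. f r \<noteq> 0 \<Longrightarrow> a \<le> r \<and> r \<le> b) \<Longrightarrow> finite {r :: int. f r \<noteq> 0}"
  by (rule finite_subset[of _ "{a..b}"]) auto

lemma finite_qbinom_support: "inj g \<Longrightarrow> finite {r. f r * qbinom e m (g r) \<noteq> 0}"
  by (rule finite_subset[OF _ finite_vimageI[of "{0..int m}" g]]) (auto dest!: qbinom_nonzeroD)

lemma Sum_any_shift_int:
  fixes f :: "int \<Rightarrow> 'b :: comm_monoid_add"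
  shows "Sum_any (\<lambda>r. f (r + c)) = Sum_any f"
  by (rule Sum_any.reindex_cong[symmetric, of "\<lambda>r :: int. r + c"])
    (auto simp: o_def intro!: bijI' exI[of _ "_ - c"])

lemma Sum_any_reflect_int:
  fixes f :: "int \<Rightarrow> 'b :: comm_monoid_add"
  shows "Sum_any (\<lambda>r. f (c - r)) = Sum_any f"
  by (rule Sum_any.reindex_cong[symmetric, of "\<lambda>r :: int. c - r"])
    (auto simp: o_def intro!: bijI' exI[of _ "c - _"])

section \<open>Finite theta sums\<close>

(* theta_exp c r = ((2c + 1) r^2 - r) / 2 *)
definition theta_exp :: "nat \<Rightarrow> int \<Rightarrow> int" where
  "theta_exp c r = int c * r^2 + r * (r - 1) div 2"

lemma theta_exp_succ: "theta_exp c (r + 1) = theta_exp c r + (2 * int c + 1) * r + int c"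
proof -
  have "(r + 1) * (r + 1 - 1) = r * (r - 1) + 2 * r"
    by (simp add: algebra_simps)
  then show ?thesis
    by (simp add: theta_exp_def power2_eq_square algebra_simps)
qed

lemma theta_exp_pred: "theta_exp c (r - 1) = theta_exp c r - (2 * int c + 1) * r + int c + 1"
  using theta_exp_succ[of c "r - 1"] by (simp add: algebra_simps)

lemma theta_exp_uminus: "theta_exp c (- r) = theta_exp c r + r"
proof -
  have "- r * (- r - 1) = r * (r - 1) + 2 * r"
    by (simp add: algebra_simps)
  then show ?thesis
    by (simp add: theta_exp_def)
qed

lemma theta_exp_add: "theta_exp (c + d) r = theta_exp c r + int d * r^2"
  by (simp add: theta_exp_def algebra_simps)

lemma theta_exp_nonneg: "0 \<le> theta_exp c r"
proof -
  have "0 \<le> r * (r - 1) div 2"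
    by (smt (verit) half_nonnegative_int_iff mult_nonneg_nonneg mult_nonpos_nonpos)
  then show ?thesis
    unfolding theta_exp_def by simp
qed

lemma theta_exp_ge_abs:
  assumes "1 \<le> c"
  shows "\<bar>r\<bar> \<le> theta_exp c r"
proof -
  have "0 \<le> r * (r - 1) div 2"
    by (smt (verit) half_nonnegative_int_iff mult_nonneg_nonneg mult_nonpos_nonpos)
  moreover have "\<bar>r\<bar> \<le> r^2"
  proof (cases "r = 0")
    case False
    then show ?thesis
      using self_le_power[of "\<bar>r\<bar>" 2] by simp
  qed simp
  moreover have "r^2 \<le> int c * r^2"
    using assms by (simp add: mult_le_cancel_right1)
  ultimately show ?thesis
    unfolding theta_exp_def by linarith
qed

definition theta_term :: "nat \<Rightarrow> int \<Rightarrow> 'a :: field fls" where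
  "theta_term c r = (-1) powi r * fls_X powi theta_exp c r"

lemma theta_term_mult_fls_X:
  assumes "theta_exp c r' + a = b + theta_exp c r"
  shows "theta_term c r' * fls_X powi a = (-1) powi (r' - r) * (fls_X powi b * (theta_term c r :: 'a :: field fls))"
proof -
  have "(-1) powi r' = (-1) powi (r' - r) * ((-1) powi r :: 'a fls)"
    by (simp flip: power_int_add)
  moreover have "fls_X powi theta_exp c r' * fls_X powi a = fls_X powi b * (fls_X powi theta_exp c r :: 'a fls)"
    using assms by (simp flip: power_int_add)
  ultimately show ?thesis
    unfolding theta_term_def by (simp add: mult_ac)
qed

lemma theta_term_add: "theta_term (c + d) r = fls_X powi (int d * r^2) * theta_term c r"
  by (simp only: theta_term_def theta_exp_add power_int_add fls_X_nonzero mult_ac simp_thms)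

definition theta_binom_sum :: "nat \<Rightarrow> nat \<Rightarrow> nat \<Rightarrow> 'a :: field fls" where
  "theta_binom_sum c e m = Sum_any (\<lambda>r. theta_term c r * qbinom e m (int (m div 2) + r))"

lemma theta_binom_sum_0 [simp]: "theta_binom_sum c e 0 = 1"
  unfolding theta_binom_sum_def
  by (subst Sum_any.expand_superset[of "{0}"])
    (auto simp: qbinom_def theta_term_def theta_exp_def split: if_splits)

lemma theta_binom_sum_odd:
  assumes "0 < e"
  shows "theta_binom_sum c e (2 * n + 1) = theta_binom_sum c e (2 * n) +
    Sum_any (\<lambda>s. theta_term c (s + 1) * fls_X powi (int e * (int n - s)) * qbinom e (2 * n) (int n + s))"
proof -
  have pascal: "theta_term c r * qbinom e (2 * n + 1) (int n + r) =
      (theta_term c r :: 'a fls) * fls_X powi (int e * (int n + 1 - r)) * qbinom e (2 * n) (int n + r - 1) +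
      theta_term c r * qbinom e (2 * n) (int n + r)" for r
  proof -
    have "int e * (int (2 * n) + 1 - (int n + r)) = int e * (int n + 1 - r)" by simp
    then have "qbinom e (2 * n + 1) (int n + r) =
        fls_X powi (int e * (int n + 1 - r)) * qbinom e (2 * n) (int n + r - 1) + (qbinom e (2 * n) (int n + r) :: 'a fls)"
      using qbinom_pascal'[OF assms, of "2 * n" "int n + r"] by (simp only: Suc_eq_plus1)
    then show ?thesis
      by (simp only: distrib_left mult.assoc)
  qed
  have "(theta_binom_sum c e (2 * n + 1) :: 'a fls) =
      Sum_any (\<lambda>r. theta_term c r * fls_X powi (int e * (int n + 1 - r)) * qbinom e (2 * n) (int n + r - 1))
      + theta_binom_sum c e (2 * n)"
  proof -
    have div: "(2 * n + 1) div 2 = n" "2 * n div 2 = n" by simp_all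
    show ?thesis
      unfolding theta_binom_sum_def div pascal
      by (rule Sum_any.distrib; rule finite_qbinom_support; simp add: inj_def)
  qed
  also have "Sum_any (\<lambda>r. (theta_term c r :: 'a fls) * fls_X powi (int e * (int n + 1 - r)) * qbinom e (2 * n) (int n + r - 1)) =
      Sum_any (\<lambda>s. theta_term c (s + 1) * fls_X powi (int e * (int n - s)) * qbinom e (2 * n) (int n + s))"
    by (subst Sum_any_shift_int[symmetric, of _ 1]) (simp add: algebra_simps)
  finally show ?thesis by simp
qed

lemma theta_binom_sum_even:
  assumes "0 < e"
  shows "theta_binom_sum c e (2 * n + 2) = theta_binom_sum c e (2 * n + 1) +
    Sum_any (\<lambda>s. theta_term c (s - 1) * fls_X powi (int e * (int n + s)) * qbinom e (2 * n + 1) (int n + s))"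
proof -
  have pascal: "theta_term c r * qbinom e (2 * n + 2) (int n + 1 + r) =
      (theta_term c r :: 'a fls) * qbinom e (2 * n + 1) (int n + r) +
      theta_term c r * fls_X powi (int e * (int n + 1 + r)) * qbinom e (2 * n + 1) (int n + 1 + r)" for r
  proof -
    have "int n + 1 + r - 1 = int n + r" "Suc (2 * n + 1) = 2 * n + 2" by simp_all
    then have "qbinom e (2 * n + 2) (int n + 1 + r) = qbinom e (2 * n + 1) (int n + r) +
        fls_X powi (int e * (int n + 1 + r)) * (qbinom e (2 * n + 1) (int n + 1 + r) :: 'a fls)"
      using qbinom_pascal[OF assms, of "2 * n + 1" "int n + 1 + r"] by (simp only:)
    then show ?thesis
      by (simp only: distrib_left mult.assoc)
  qed
  have "(theta_binom_sum c e (2 * n + 2) :: 'a fls) = theta_binom_sum c e (2 * n + 1) +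
      Sum_any (\<lambda>r. theta_term c r * fls_X powi (int e * (int n + 1 + r)) * qbinom e (2 * n + 1) (int n + 1 + r))"
  proof -
    have div: "(2 * n + 2) div 2 = n + 1" "(2 * n + 1) div 2 = n" by simp_all
    show ?thesis
      unfolding theta_binom_sum_def div of_nat_add of_nat_1 pascal
      by (rule Sum_any.distrib; rule finite_qbinom_support; simp add: inj_def)
  qed
  also have "Sum_any (\<lambda>r. (theta_term c r :: 'a fls) * fls_X powi (int e * (int n + 1 + r)) * qbinom e (2 * n + 1) (int n + 1 + r)) =
      Sum_any (\<lambda>s. theta_term c (s - 1) * fls_X powi (int e * (int n + s)) * qbinom e (2 * n + 1) (int n + s))"
    by (subst Sum_any_shift_int[symmetric, of _ "-1"]) (simp add: algebra_simps)
  finally show ?thesis .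
qed

lemma theta_binom_sum_scaled:
  "Sum_any (\<lambda>s. a * (theta_term c s * qbinom e m (int (m div 2) + s))) = a * theta_binom_sum c e m"
  unfolding theta_binom_sum_def
  by (rule Sum_any_right_distrib[symmetric], rule finite_qbinom_support) (simp add: inj_def)

definition jacobi_product :: "nat \<Rightarrow> nat \<Rightarrow> 'a :: field fls" where
  "jacobi_product c n = (\<Prod>i<n. (1 - fls_X ^ ((2 * c + 1) * i + c)) * (1 - fls_X ^ ((2 * c + 1) * i + c + 1)))"

lemma jacobi_sum_odd_step:
  "theta_binom_sum c (2 * c + 1) (2 * n + 1) =
    (1 - fls_X ^ ((2 * c + 1) * n + c)) * (theta_binom_sum c (2 * c + 1) (2 * n) :: 'a :: field fls)"
proof -
  let ?e = "2 * c + 1"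
  have shift: "theta_term c (s + 1) * fls_X powi (int ?e * (int n - s)) = - (fls_X ^ (?e * n + c)) * (theta_term c s :: 'a fls)" for s
    using theta_term_mult_fls_X[of c "s + 1" "int ?e * (int n - s)" "int (?e * n + c)" s]
    unfolding theta_exp_succ power_int_of_nat by (simp add: algebra_simps)
  have "(theta_binom_sum c ?e (2 * n + 1) :: 'a fls) = theta_binom_sum c ?e (2 * n) +
      Sum_any (\<lambda>s. theta_term c (s + 1) * fls_X powi (int ?e * (int n - s)) * qbinom ?e (2 * n) (int n + s))"
    by (rule theta_binom_sum_odd) simp
  also have "Sum_any (\<lambda>s. (theta_term c (s + 1) :: 'a fls) * fls_X powi (int ?e * (int n - s)) * qbinom ?e (2 * n) (int n + s)) =
      Sum_any (\<lambda>s. - (fls_X ^ (?e * n + c)) * (theta_term c s * qbinom ?e (2 * n) (int (2 * n div 2) + s)))"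
    unfolding shift by (simp add: mult.assoc)
  also have "\<dots> = - (fls_X ^ (?e * n + c)) * theta_binom_sum c ?e (2 * n)"
    by (rule theta_binom_sum_scaled)
  finally show ?thesis by (simp add: algebra_simps)
qed

lemma jacobi_sum_even_step:
  "theta_binom_sum c (2 * c + 1) (2 * n + 2) =
    (1 - fls_X ^ ((2 * c + 1) * n + c + 1)) * (theta_binom_sum c (2 * c + 1) (2 * n + 1) :: 'a :: field fls)"
proof -
  let ?e = "2 * c + 1"
  have shift: "theta_term c (s - 1) * fls_X powi (int ?e * (int n + s)) = - (fls_X ^ (?e * n + c + 1)) * (theta_term c s :: 'a fls)" for s
    using theta_term_mult_fls_X[of c "s - 1" "int ?e * (int n + s)" "int (?e * n + c + 1)" s]
    unfolding theta_exp_pred power_int_of_nat by (simp add: algebra_simps)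
  have "(theta_binom_sum c ?e (2 * n + 2) :: 'a fls) = theta_binom_sum c ?e (2 * n + 1) +
      Sum_any (\<lambda>s. theta_term c (s - 1) * fls_X powi (int ?e * (int n + s)) * qbinom ?e (2 * n + 1) (int n + s))"
    by (rule theta_binom_sum_even) simp
  also have "Sum_any (\<lambda>s. (theta_term c (s - 1) :: 'a fls) * fls_X powi (int ?e * (int n + s)) * qbinom ?e (2 * n + 1) (int n + s)) =
      Sum_any (\<lambda>s. - (fls_X ^ (?e * n + c + 1)) * (theta_term c s * qbinom ?e (2 * n + 1) (int ((2 * n + 1) div 2) + s)))"
    unfolding shift by (simp add: mult.assoc)
  also have "\<dots> = - (fls_X ^ (?e * n + c + 1)) * theta_binom_sum c ?e (2 * n + 1)"
    by (rule theta_binom_sum_scaled)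
  finally show ?thesis by (simp add: algebra_simps)
qed

theorem finite_jacobi_triple_product:
  "theta_binom_sum c (2 * c + 1) (2 * n) = (jacobi_product c n :: 'a :: field fls)"
proof (induction n)
  case (Suc n)
  have "theta_binom_sum c (2 * c + 1) (2 * Suc n) = (theta_binom_sum c (2 * c + 1) (2 * n) :: 'a fls) *
      ((1 - fls_X ^ ((2 * c + 1) * n + c)) * (1 - fls_X ^ ((2 * c + 1) * n + c + 1)))"
    using jacobi_sum_odd_step[of c n, where 'a = 'a] jacobi_sum_even_step[of c n, where 'a = 'a]
    by (simp add: mult_ac)
  then show ?case
    unfolding Suc.IH by (simp add: jacobi_product_def)
qed (simp add: jacobi_product_def)

definition odd_qpoch :: "nat \<Rightarrow> 'a :: field fls" where
  "odd_qpoch n = (\<Prod>i<n. 1 - fls_X ^ (2 * i + 1))"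

lemma odd_qpoch_sum_odd_step:
  "theta_binom_sum 1 2 (2 * n + 1) = (1 - fls_X ^ (2 * n + 1)) * (theta_binom_sum 1 2 (2 * n) :: 'a :: field fls)"
proof -
  have shift: "theta_term 1 (s + 1) * fls_X powi (int 2 * (int n - s)) = - (fls_X ^ (2 * n + 1)) * (theta_term 1 (- s) :: 'a fls)" for s
    using theta_term_mult_fls_X[of 1 "s + 1" "2 * (int n - s)" "int (2 * n + 1)" "- s"]
    unfolding theta_exp_succ theta_exp_uminus power_int_of_nat by (simp add: algebra_simps)
  have symmetric: "qbinom 2 (2 * n) (int n - s) = (qbinom 2 (2 * n) (int (2 * n div 2) + s) :: 'a fls)" for s
    using qbinom_symmetric[where 'a = 'a, of 2 "2 * n" "int n - s"] by simp
  have "Sum_any (\<lambda>s. (theta_term 1 (s + 1) :: 'a fls) * fls_X powi (int 2 * (int n - s)) * qbinom 2 (2 * n) (int n + s)) =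
      Sum_any (\<lambda>s. - (fls_X ^ (2 * n + 1)) * (theta_term 1 (- s) * qbinom 2 (2 * n) (int n - (- s)) :: 'a fls))"
    unfolding shift by (simp add: mult.assoc)
  also have "\<dots> = Sum_any (\<lambda>s. - (fls_X ^ (2 * n + 1)) * (theta_term 1 s * qbinom 2 (2 * n) (int n - s)))"
    using Sum_any_reflect_int[of "\<lambda>s. - (fls_X ^ (2 * n + 1)) * (theta_term 1 s * qbinom 2 (2 * n) (int n - s) :: 'a fls)" 0]
    by simp
  also have "\<dots> = - (fls_X ^ (2 * n + 1)) * theta_binom_sum 1 2 (2 * n)"
    unfolding symmetric by (rule theta_binom_sum_scaled)
  finally have "Sum_any (\<lambda>s. theta_term 1 (s + 1) * fls_X powi (int 2 * (int n - s)) * qbinom 2 (2 * n) (int n + s)) =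
      - (fls_X ^ (2 * n + 1)) * (theta_binom_sum 1 2 (2 * n) :: 'a fls)" .
  moreover have "theta_binom_sum 1 2 (2 * n + 1) = theta_binom_sum 1 2 (2 * n) +
      Sum_any (\<lambda>s. theta_term 1 (s + 1) * fls_X powi (int 2 * (int n - s)) * (qbinom 2 (2 * n) (int n + s) :: 'a fls))"
    by (rule theta_binom_sum_odd) simp
  ultimately show ?thesis
    by (simp add: algebra_simps)
qed

lemma odd_qpoch_sum_even_step:
  "theta_binom_sum 1 2 (2 * n + 2) = (theta_binom_sum 1 2 (2 * n + 1) :: 'a :: field_char_0 fls)"
proof -
  define A :: "int \<Rightarrow> 'a fls" where
    "A s = theta_term 1 (s - 1) * fls_X powi (2 * (int n + s)) * qbinom 2 (2 * n + 1) (int n + s)" for s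
  \<comment> \<open>the reflection s \<mapsto> 1 - s reverses the sign of each term, so in characteristic 0 the sum vanishes\<close>
  have "A (1 - s) = - A s" for s
  proof -
    have "qbinom 2 (2 * n + 1) (int n + (1 - s)) = (qbinom 2 (2 * n + 1) (int n + s) :: 'a fls)"
      using qbinom_symmetric[of 2 "2 * n + 1" "int n + s"] by (simp add: algebra_simps)
    moreover have "theta_term 1 (- s) * fls_X powi (2 * (int n + (1 - s))) =
        - (theta_term 1 (s - 1) * (fls_X powi (2 * (int n + s)) :: 'a fls))"
      using theta_term_mult_fls_X[of 1 "- s" "2 * (int n + (1 - s))" "2 * (int n + s)" "s - 1"]
      unfolding theta_exp_pred theta_exp_uminus by (simp add: algebra_simps)
    ultimately show ?thesis
      by (simp add: A_def)
  qed
  moreover have "finite {s. A s \<noteq> 0}"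
    unfolding A_def by (rule finite_qbinom_support) (simp add: inj_def)
  ultimately have "Sum_any A = - Sum_any A"
    using Sum_any_reflect_int[of A 1] Sum_any_right_distrib[of A "-1"] by simp
  then have "2 * Sum_any A = 0"
    by (simp only: mult_2 eq_neg_iff_add_eq_0)
  then have "Sum_any A = 0" by simp
  moreover have "theta_binom_sum 1 2 (2 * n + 2) = theta_binom_sum 1 2 (2 * n + 1) + Sum_any A"
    unfolding A_def by (rule theta_binom_sum_even[of 2, unfolded of_nat_numeral]) simp
  ultimately show ?thesis
    by simp
qed

theorem theta_binom_sum_eq_odd_qpoch:
  "theta_binom_sum 1 2 (2 * n) = (odd_qpoch n :: 'a :: field_char_0 fls)"
proof (induction n)
  case (Suc n)
  show ?case
    using odd_qpoch_sum_odd_step[of n, where 'a = 'a] odd_qpoch_sum_even_step[of n, where 'a = 'a] Suc.IH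
    by (simp add: odd_qpoch_def mult.commute)
qed (simp add: odd_qpoch_def)

section \<open>Bailey's lemma\<close>

(* Classifying partitions into parts \<le> K + b by their Durfee rectangle m \<times> (m + b). *)
definition durfee_weight :: "nat \<Rightarrow> nat \<Rightarrow> int \<Rightarrow> 'a :: field fls" where
  "durfee_weight e b m = fls_X powi (int e * (m^2 + int b * m)) / qpoch e (nat m + b)"

lemma durfee_weight_shift:
  assumes "0 \<le> s"
  shows "durfee_weight e b (s + 1) * fls_X powi (int e * (int K - s)) =
    fls_X ^ (e * (K + b + 1)) * (durfee_weight e (b + 1) s :: 'a :: field fls)"
proof -
  have "nat (s + 1) + b = nat s + (b + 1)"
    using assms by simp
  moreover have "fls_X powi (int e * ((s + 1)^2 + int b * (s + 1))) * fls_X powi (int e * (int K - s)) =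
      fls_X ^ (e * (K + b + 1)) * (fls_X powi (int e * (s^2 + int (b + 1) * s)) :: 'a fls)"
    by (simp add: power2_eq_square algebra_simps flip: power_int_add power_int_of_nat)
  ultimately show ?thesis
    unfolding durfee_weight_def by (simp add: field_simps)
qed

lemma durfee_identity:
  assumes e: "0 < e"
  shows "Sum_any (\<lambda>m. durfee_weight e b m * qbinom e K m) = (1 / qpoch e (K + b) :: 'a :: field fls)"
proof (induction K arbitrary: b)
  case 0
  show ?case
    by (subst Sum_any.expand_superset[of "{0}"]) (auto simp: qbinom_def durfee_weight_def dest: qbinom_nonzeroD)
next
  case (Suc K)
  have pascal: "durfee_weight e b m * qbinom e (Suc K) m =
      durfee_weight e b m * fls_X powi (int e * (int K + 1 - m)) * qbinom e K (m - 1) +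
      (durfee_weight e b m * qbinom e K m :: 'a fls)" for m
    by (simp add: qbinom_pascal'[OF e] distrib_left mult.assoc)
  have "Sum_any (\<lambda>m. durfee_weight e b m * qbinom e (Suc K) m) =
      Sum_any (\<lambda>m. durfee_weight e b m * fls_X powi (int e * (int K + 1 - m)) * qbinom e K (m - 1)) +
      (1 / qpoch e (K + b) :: 'a fls)"
    unfolding pascal Suc.IH[symmetric]
    by (rule Sum_any.distrib; rule finite_qbinom_support; simp add: inj_def)
  also have "Sum_any (\<lambda>m. durfee_weight e b m * fls_X powi (int e * (int K + 1 - m)) * qbinom e K (m - 1)) =
      Sum_any (\<lambda>s. fls_X ^ (e * (K + b + 1)) * (durfee_weight e (b + 1) s * (qbinom e K s :: 'a fls)))"
  proof -
    have shift: "durfee_weight e b (s + 1) * fls_X powi (int e * (int K - s)) * qbinom e K s =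
        fls_X ^ (e * (K + b + 1)) * (durfee_weight e (b + 1) s * (qbinom e K s :: 'a fls))" for s
    proof (cases "0 \<le> s")
      case True
      then show ?thesis by (simp add: durfee_weight_shift mult.assoc)
    qed (simp add: qbinom_def)
    have "Sum_any (\<lambda>m. durfee_weight e b m * fls_X powi (int e * (int K + 1 - m)) * qbinom e K (m - 1)) =
        Sum_any (\<lambda>s. durfee_weight e b (s + 1) * fls_X powi (int e * (int K - s)) * (qbinom e K s :: 'a fls))"
      by (subst Sum_any_shift_int[symmetric, of _ 1]) (simp add: algebra_simps)
    then show ?thesis
      by (simp only: shift)
  qed
  also have "\<dots> = fls_X ^ (e * (K + b + 1)) * (1 / qpoch e (K + (b + 1)))"
    unfolding Suc.IH[symmetric]
    by (rule Sum_any_right_distrib[symmetric], rule finite_qbinom_support) (simp add: inj_def)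
  also have "fls_X ^ (e * (K + b + 1)) * (1 / qpoch e (K + (b + 1))) + 1 / qpoch e (K + b) =
      (1 / qpoch e (Suc K + b) :: 'a fls)"
  proof -
    have qpoch: "qpoch e (Suc K + b) = qpoch e (K + b) * (1 - fls_X ^ (e * (K + b + 1)))"
      "qpoch e (K + (b + 1)) = qpoch e (K + b) * (1 - (fls_X ^ (e * (K + b + 1)) :: 'a fls))"
      by (simp_all add: qpoch_Suc)
    have field: "x * (1 / (A * (1 - x))) + 1 / A = 1 / (A * (1 - x))"
      if "A \<noteq> 0" "1 - x \<noteq> 0" for A x :: "'a fls"
    proof -
      have "x * (1 / (A * (1 - x))) + 1 / A = (x + (1 - x)) / (A * (1 - x))"
        using that by (simp add: field_simps)
      then show ?thesis by simp
    qed
    show ?thesis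
      unfolding qpoch by (rule field) (use e in \<open>simp_all add: qpoch_nonzero\<close>)
  qed
  finally show ?case .
qed

definition bailey_weight :: "nat \<Rightarrow> nat \<Rightarrow> int \<Rightarrow> 'a :: field fls" where
  "bailey_weight e N j = qbinom e N j * fls_X powi (int e * j^2) * qpoch e (nat j) / qpoch e (2 * nat j)"

lemma bailey_weight_eq0: "\<not> (0 \<le> j \<and> j \<le> int N) \<Longrightarrow> bailey_weight e N j = 0"
  by (auto simp: bailey_weight_def qbinom_def)

lemma bailey_weight_shift:
  assumes e: "0 < e" and s: "0 \<le> s" "s \<le> int K"
  shows "bailey_weight e (K + a) (s + int a) * qbinom e (2 * nat (s + int a)) (s + int a + int a) =
    fls_X powi (int e * int a ^ 2) * qpoch e (K + a) / qpoch e K *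
    (durfee_weight e (2 * a) s * (qbinom e K s :: 'a :: field fls))"
proof -
  define t where "t = nat s"
  have t: "s = int t" "t \<le> K"
    using s by (auto simp: t_def)
  have ne: "qpoch e m \<noteq> (0 :: 'a fls)" for m
    using qpoch_nonzero[OF e] .
  have shift: "int t + int a = int (t + a)" "int (t + a) + int a = int (t + 2 * a)"
    by simp_all
  have binomials:
    "qbinom e (K + a) (int (t + a)) = qpoch e (K + a) / (qpoch e (t + a) * (qpoch e (K - t) :: 'a fls))"
    "qbinom e (2 * (t + a)) (int (t + 2 * a)) = qpoch e (2 * (t + a)) / (qpoch e (t + 2 * a) * (qpoch e t :: 'a fls))"
    "qbinom e K (int t) = qpoch e K / (qpoch e t * (qpoch e (K - t) :: 'a fls))"
    using qbinom_of_nat[where 'a = 'a, of "t + a" "K + a" e]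
      qbinom_of_nat[where 'a = 'a, of "t + 2 * a" "2 * (t + a)" e]
      qbinom_of_nat[where 'a = 'a, of t K e] t(2)
    by simp_all
  have power: "fls_X powi (int e * int (t + a) ^ 2) =
      fls_X powi (int e * int a ^ 2) * (fls_X powi (int e * (int t ^ 2 + int (2 * a) * int t)) :: 'a fls)"
    by (simp add: power2_eq_square algebra_simps flip: power_int_add)
  show ?thesis
    unfolding t(1) bailey_weight_def durfee_weight_def shift nat_int binomials power
    using ne by (simp add: field_simps)
qed

lemma qbinom_bailey_sum_nat:
  assumes e: "0 < e"
  shows "Sum_any (\<lambda>j. bailey_weight e N j * qbinom e (2 * nat j) (j + int a)) =
    fls_X powi (int e * int a ^ 2) * qpoch e N * qbinom e (2 * N) (int N + int a) / (qpoch e (2 * N) :: 'a :: field fls)"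
proof (cases "a \<le> N")
  case False
  have zero: "bailey_weight e N j * qbinom e (2 * nat j) (j + int a) = (0 :: 'a fls)" for j
  proof (cases "0 \<le> j \<and> j \<le> int N")
    case True
    with False have "qbinom e (2 * nat j) (j + int a) = (0 :: 'a fls)"
      by (simp add: qbinom_def)
    then show ?thesis by simp
  qed (simp add: bailey_weight_eq0)
  have "qbinom e (2 * N) (int N + int a) = (0 :: 'a fls)"
    using False by (simp add: qbinom_def)
  then show ?thesis
    by (simp only: zero Sum_any.neutral) simp
next
  case True
  define K where "K = N - a"
  have N: "N = K + a" using True by (simp add: K_def)
  have ne: "qpoch e m \<noteq> (0 :: 'a fls)" for m
    using qpoch_nonzero[OF e] .
  have "Sum_any (\<lambda>j. bailey_weight e N j * qbinom e (2 * nat j) (j + int a)) =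
      Sum_any (\<lambda>s. bailey_weight e N (s + int a) * (qbinom e (2 * nat (s + int a)) (s + int a + int a) :: 'a fls))"
    by (rule Sum_any_shift_int[symmetric])
  also have "\<dots> = Sum_any (\<lambda>s. fls_X powi (int e * int a ^ 2) * qpoch e N / qpoch e K *
      (durfee_weight e (2 * a) s * qbinom e K s))"
  proof (rule Sum_any.cong)
    fix s
    consider "s < 0" | "0 \<le> s \<and> s \<le> int K" | "s > int K" by linarith
    then show "bailey_weight e N (s + int a) * qbinom e (2 * nat (s + int a)) (s + int a + int a) =
        fls_X powi (int e * int a ^ 2) * qpoch e N / qpoch e K * (durfee_weight e (2 * a) s * (qbinom e K s :: 'a fls))"
    proof cases
      case 1
      then have "bailey_weight e N (s + int a) = 0 \<or> qbinom e (2 * nat (s + int a)) (s + int a + int a) = (0 :: 'a fls)"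
        by (cases "0 \<le> s + int a") (simp_all add: bailey_weight_eq0 qbinom_def)
      with 1 show ?thesis by (auto simp: qbinom_def)
    next
      case 2
      then show ?thesis
        unfolding N by (intro bailey_weight_shift e) auto
    next
      case 3
      then show ?thesis
        by (simp add: N bailey_weight_eq0 qbinom_def)
    qed
  qed
  also have "\<dots> = fls_X powi (int e * int a ^ 2) * qpoch e N / qpoch e K * (1 / qpoch e (K + 2 * a))"
    by (subst durfee_identity[OF e, symmetric], rule Sum_any_right_distrib[symmetric], rule finite_qbinom_support)
      (simp add: inj_def)
  also have "\<dots> = fls_X powi (int e * int a ^ 2) * qpoch e N * qbinom e (2 * N) (int N + int a) / qpoch e (2 * N)"
  proof -
    have "int N + int a = int (K + 2 * a)" "2 * N - (K + 2 * a) = K" "K + 2 * a \<le> 2 * N"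
      by (simp_all add: N)
    then have "qbinom e (2 * N) (int N + int a) = qpoch e (2 * N) / (qpoch e (K + 2 * a) * (qpoch e K :: 'a fls))"
      using qbinom_of_nat[where 'a = 'a, of "K + 2 * a" "2 * N" e] by (simp only:)
    with ne show ?thesis by (simp add: field_simps)
  qed
  finally show ?thesis .
qed

lemma qbinom_bailey_sum:
  assumes e: "0 < e"
  shows "Sum_any (\<lambda>j. bailey_weight e N j * qbinom e (2 * nat j) (j + r)) =
    fls_X powi (int e * r ^ 2) * qpoch e N * qbinom e (2 * N) (int N + r) / (qpoch e (2 * N) :: 'a :: field fls)"
proof (cases "0 \<le> r")
  case True
  then show ?thesis
    using qbinom_bailey_sum_nat[OF e, of N "nat r"] by simp
next
  case False
  have "bailey_weight e N j * qbinom e (2 * nat j) (j + r) =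
      bailey_weight e N j * (qbinom e (2 * nat j) (j + int (nat (- r))) :: 'a fls)" for j
  proof (cases "0 \<le> j")
    case True
    then have "qbinom e (2 * nat j) (j + r) = (qbinom e (2 * nat j) (int (2 * nat j) - (j + r)) :: 'a fls)"
      by (simp only: qbinom_symmetric)
    with True False show ?thesis by simp
  qed (simp add: bailey_weight_eq0)
  then have "Sum_any (\<lambda>j. bailey_weight e N j * qbinom e (2 * nat j) (j + r)) =
      Sum_any (\<lambda>j. bailey_weight e N j * (qbinom e (2 * nat j) (j + int (nat (- r))) :: 'a fls))"
    by (rule Sum_any.cong)
  also have "\<dots> = fls_X powi (int e * int (nat (- r)) ^ 2) * qpoch e N *
      qbinom e (2 * N) (int N + int (nat (- r))) / qpoch e (2 * N)"
    by (rule qbinom_bailey_sum_nat[OF e])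
  also have "qbinom e (2 * N) (int N + int (nat (- r))) = qbinom e (2 * N) (int (2 * N) - (int N + int (nat (- r))))"
    by (simp only: qbinom_symmetric)
  also have "int (nat (- r)) = - r"
    using False by simp
  finally show ?thesis by simp
qed

lemma bailey_sum_odd_qpoch:
  "Sum_any (\<lambda>j. bailey_weight 2 N j * odd_qpoch (nat j)) =
    qpoch 2 N / qpoch 2 (2 * N) * (theta_binom_sum 3 2 (2 * N) :: 'a :: field_char_0 fls)"
proof -
  have expand: "bailey_weight 2 N j * odd_qpoch (nat j) =
      Sum_any (\<lambda>r. theta_term 1 r * (bailey_weight 2 N j * (qbinom 2 (2 * nat j) (j + r) :: 'a fls)))" for j
  proof (cases "0 \<le> j")
    case True
    have "bailey_weight 2 N j * odd_qpoch (nat j) =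
        bailey_weight 2 N j * (theta_binom_sum 1 2 (2 * nat j) :: 'a fls)"
      by (simp only: theta_binom_sum_eq_odd_qpoch)
    also have "\<dots> = Sum_any (\<lambda>r. bailey_weight 2 N j * (theta_term 1 r * qbinom 2 (2 * nat j) (int (2 * nat j div 2) + r)))"
      by (rule theta_binom_sum_scaled[symmetric])
    finally show ?thesis
      using True by (simp add: mult.left_commute)
  qed (simp add: bailey_weight_eq0)
  have "Sum_any (\<lambda>j. bailey_weight 2 N j * odd_qpoch (nat j)) =
      Sum_any (\<lambda>j. Sum_any (\<lambda>r. theta_term 1 r * (bailey_weight 2 N j * (qbinom 2 (2 * nat j) (j + r) :: 'a fls))))"
    by (simp only: expand)
  also have "\<dots> = Sum_any (\<lambda>r. Sum_any (\<lambda>j. theta_term 1 r * (bailey_weight 2 N j * qbinom 2 (2 * nat j) (j + r))))"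
    by (rule Sum_any.swap[of "{0..int N} \<times> {- int N..int N}"])
      (auto simp: bailey_weight_def dest!: qbinom_nonzeroD)
  also have "\<dots> = Sum_any (\<lambda>r. theta_term 1 r * Sum_any (\<lambda>j. bailey_weight 2 N j * qbinom 2 (2 * nat j) (j + r)))"
    by (rule Sum_any.cong, rule Sum_any_right_distrib[symmetric], rule finite_nonzero_int_bounded[of _ 0 "int N"])
      (auto simp: bailey_weight_def dest!: qbinom_nonzeroD)
  also have "\<dots> = Sum_any (\<lambda>r. qpoch 2 N / qpoch 2 (2 * N) * (theta_term 3 r * qbinom 2 (2 * N) (int (2 * N div 2) + r)))"
  proof (rule Sum_any.cong)
    fix r
    have "theta_term 3 r = fls_X powi (2 * r^2) * (theta_term 1 r :: 'a fls)"
      using theta_term_add[of 1 2 r] by (simp add: numeral_3_eq_3)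
    then show "theta_term 1 r * Sum_any (\<lambda>j. bailey_weight 2 N j * qbinom 2 (2 * nat j) (j + r)) =
        qpoch 2 N / qpoch 2 (2 * N) * (theta_term 3 r * (qbinom 2 (2 * N) (int (2 * N div 2) + r) :: 'a fls))"
      by (simp add: qbinom_bailey_sum)
  qed
  also have "\<dots> = qpoch 2 N / qpoch 2 (2 * N) * theta_binom_sum 3 2 (2 * N)"
    by (rule theta_binom_sum_scaled)
  finally show ?thesis .
qed

section \<open>Truncated comparison of Laurent series\<close>

definition vanishes_below :: "nat \<Rightarrow> 'a :: zero fls \<Rightarrow> bool" where
  "vanishes_below m f \<longleftrightarrow> (\<forall>k < int m. fls_nth f k = 0)"

lemma vanishes_below_iff_subdegree: "vanishes_below m f \<longleftrightarrow> f = 0 \<or> int m \<le> fls_subdegree f"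
  unfolding vanishes_below_def
  by (auto intro: fls_subdegree_geI)

lemma vanishes_below_mono: "m' \<le> m \<Longrightarrow> vanishes_below m f \<Longrightarrow> vanishes_below m' f"
  by (simp add: vanishes_below_def)

lemma vanishes_below_zero [simp]: "vanishes_below m 0"
  by (simp add: vanishes_below_def)

lemma vanishes_below_one [simp]: "vanishes_below 0 1"
  by (simp add: vanishes_below_def)

lemma vanishes_below_fls_X_power [simp]: "vanishes_below k (fls_X ^ k)"
  by (simp add: vanishes_below_def)

lemma vanishes_below_0_fls_X_power: "vanishes_below 0 (fls_X ^ k)"
  by (rule vanishes_below_mono[OF _ vanishes_below_fls_X_power]) simp

lemma vanishes_below_add:
  "vanishes_below m f \<Longrightarrow> vanishes_below m g \<Longrightarrow> vanishes_below m (f + g :: 'a :: monoid_add fls)"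
  by (simp add: vanishes_below_def)

lemma vanishes_below_diff:
  "vanishes_below m f \<Longrightarrow> vanishes_below m g \<Longrightarrow> vanishes_below m (f - g :: 'a :: group_add fls)"
  by (simp add: vanishes_below_def)

lemma vanishes_below_minus_commute:
  "vanishes_below m (f - g :: 'a :: group_add fls) \<Longrightarrow> vanishes_below m (g - f)"
  by (simp add: vanishes_below_def)

lemma vanishes_below_diff_trans:
  "vanishes_below m (f - g) \<Longrightarrow> vanishes_below m (g - h) \<Longrightarrow> vanishes_below m (f - h :: 'a :: ab_group_add fls)"
  using vanishes_below_add[of m "f - g" "g - h"] by simp

lemma vanishes_below_sum:
  "(\<And>i. i \<in> A \<Longrightarrow> vanishes_below m (f i)) \<Longrightarrow> vanishes_below m (\<Sum>i\<in>A. f i :: 'a :: comm_monoid_add fls)"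
  by (simp add: vanishes_below_def fls_nth_sum)

lemma vanishes_below_mult:
  fixes f g :: "'a :: {comm_monoid_add, mult_zero} fls"
  assumes "vanishes_below a f" "vanishes_below b g"
  shows "vanishes_below (a + b) (f * g)"
proof (cases "f = 0 \<or> g = 0")
  case False
  with assms have "int (a + b) \<le> fls_subdegree f + fls_subdegree g"
    by (simp add: vanishes_below_iff_subdegree)
  then show ?thesis
    by (simp add: vanishes_below_def fls_times_nth_eq0)
qed auto

lemma vanishes_below_mult_left:
  "vanishes_below 0 f \<Longrightarrow> vanishes_below m g \<Longrightarrow> vanishes_below m (f * g :: 'a :: {comm_monoid_add, mult_zero} fls)"
  using vanishes_below_mult[of 0 f m g] by simp

lemma vanishes_below_mult_right:
  "vanishes_below m f \<Longrightarrow> vanishes_below 0 g \<Longrightarrow> vanishes_below m (f * g :: 'a :: {comm_monoid_add, mult_zero} fls)"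
  using vanishes_below_mult[of m f 0 g] by simp

lemma vanishes_below_prod:
  "(\<And>i. i \<in> A \<Longrightarrow> vanishes_below 0 (f i)) \<Longrightarrow> vanishes_below 0 (\<Prod>i\<in>A. f i :: 'a :: comm_semiring_1 fls)"
  by (induction A rule: infinite_finite_induct) (auto intro: vanishes_below_mult_left)

lemma vanishes_below_mult_diff:
  fixes a a' b b' :: "'a :: comm_ring fls"
  assumes "vanishes_below m (a - a')" "vanishes_below m (b - b')" "vanishes_below 0 a" "vanishes_below 0 b'"
  shows "vanishes_below m (a * b - a' * b')"
proof -
  have "a * b - a' * b' = a * (b - b') + (a - a') * b'"
    by (simp add: algebra_simps)
  then show ?thesis
    using assms by (simp add: vanishes_below_add vanishes_below_mult_left vanishes_below_mult_right)
qed

lemma vanishes_below_inverse: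
  "fls_subdegree f = 0 \<Longrightarrow> vanishes_below 0 (inverse f :: 'a :: division_ring fls)"
  by (simp add: vanishes_below_iff_subdegree)

lemma vanishes_below_inverse_diff:
  fixes f g :: "'a :: field fls"
  assumes "fls_subdegree f = 0" "fls_subdegree g = 0" "f \<noteq> 0" "g \<noteq> 0" "vanishes_below m (f - g)"
  shows "vanishes_below m (inverse f - inverse g)"
proof -
  have "inverse f - inverse g = inverse f * inverse g * (g - f)"
    using assms by (simp add: field_simps)
  then show ?thesis
    using assms
    by (simp add: vanishes_below_mult_left vanishes_below_mult vanishes_below_inverse vanishes_below_minus_commute)
qed

lemma fls_subdegree_1_minus_X_power: "0 < k \<Longrightarrow> fls_subdegree (1 - fls_X ^ k :: 'a :: field fls) = 0"
  by (rule fls_subdegree_eqI) auto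

lemma fls_subdegree_qpoch: "0 < e \<Longrightarrow> fls_subdegree (qpoch e L :: 'a :: field fls) = 0"
  by (induction L) (simp_all add: qpoch_Suc qpoch_nonzero fls_subdegree_1_minus_X_power)

lemma vanishes_below_qpoch: "0 < e \<Longrightarrow> vanishes_below 0 (qpoch e L :: 'a :: field fls)"
  by (simp add: vanishes_below_iff_subdegree fls_subdegree_qpoch)

lemma vanishes_below_inverse_qpoch: "0 < e \<Longrightarrow> vanishes_below 0 (inverse (qpoch e L) :: 'a :: field fls)"
  by (simp add: vanishes_below_inverse fls_subdegree_qpoch)

lemma qpoch_diff_vanishes_below:
  assumes "0 < e" "a \<le> b"
  shows "vanishes_below (e * (a + 1)) (qpoch e b - qpoch e a :: 'a :: field fls)"
  using assms(2)
proof (induction b rule: dec_induct)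
  case (step b)
  have eq: "qpoch e (Suc b) - qpoch e a = (qpoch e b - qpoch e a) - qpoch e b * (fls_X ^ (e * Suc b) :: 'a fls)"
    by (simp add: qpoch_Suc algebra_simps)
  have "vanishes_below (e * (a + 1)) (fls_X ^ (e * Suc b) :: 'a fls)"
    using step(1) by (intro vanishes_below_mono[OF _ vanishes_below_fls_X_power]) simp
  then show ?case
    unfolding eq
    by (intro vanishes_below_diff step.IH vanishes_below_mult_left vanishes_below_qpoch assms(1))
qed simp

lemma qpoch_diff_vanishes_below':
  assumes "0 < e" "m \<le> e * (min a b + 1)"
  shows "vanishes_below m (qpoch e a - qpoch e b :: 'a :: field fls)"
proof (cases "a \<le> b")
  case True
  have "vanishes_below (e * (a + 1)) (qpoch e a - qpoch e b :: 'a fls)"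
    using qpoch_diff_vanishes_below[OF assms(1) True] by (rule vanishes_below_minus_commute)
  moreover have "m \<le> e * (a + 1)"
    using assms(2) True by (simp add: min_def)
  ultimately show ?thesis
    by (simp add: vanishes_below_mono)
next
  case False
  have "vanishes_below (e * (b + 1)) (qpoch e a - qpoch e b :: 'a fls)"
    using qpoch_diff_vanishes_below[OF assms(1), of b a] False by simp
  moreover have "m \<le> e * (b + 1)"
    using assms(2) False by (simp add: min_def)
  ultimately show ?thesis
    by (simp add: vanishes_below_mono)
qed

lemma inverse_qpoch_diff_vanishes_below:
  assumes "0 < e" "m \<le> e * (min a b + 1)"
  shows "vanishes_below m (inverse (qpoch e a) - inverse (qpoch e b) :: 'a :: field fls)"
  using assms
  by (intro vanishes_below_inverse_diff qpoch_diff_vanishes_below') (simp_all add: fls_subdegree_qpoch qpoch_nonzero)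

section \<open>From the finite identities to the generating functions\<close>

lemma vanishes_below_theta_term: "vanishes_below (nat (theta_exp c r)) (theta_term c r :: 'a :: field fls)"
proof -
  have "theta_term c r = (-1) powi r * (fls_X ^ nat (theta_exp c r) :: 'a fls)"
    using theta_exp_nonneg[of c r] by (simp add: theta_term_def power_int_def)
  then show ?thesis
    by (cases "even r") (simp_all add: vanishes_below_def)
qed

definition theta_partial :: "nat \<Rightarrow> nat \<Rightarrow> 'a :: field fls" where
  "theta_partial c N = (\<Sum>r = - int N..int N. theta_term c r)"

lemma theta_binom_sum_even_eq_sum:
  "theta_binom_sum c e (2 * N) = (\<Sum>r = - int N..int N. theta_term c r * qbinom e (2 * N) (int N + r))"
proof -
  have "2 * N div 2 = N" by simp
  then show ?thesis
    unfolding theta_binom_sum_def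
    by (simp only:) (rule Sum_any.expand_superset; auto dest!: qbinom_nonzeroD)
qed

lemma qbinom_central_eq:
  "\<bar>r\<bar> \<le> int N \<Longrightarrow>
    qbinom e (2 * N) (int N + r) = qpoch e (2 * N) * inverse (qpoch e (nat (int N + r))) * inverse (qpoch e (nat (int N - r)))"
proof -
  assume "\<bar>r\<bar> \<le> int N"
  then have "2 * N - nat (int N + r) = nat (int N - r)" "0 \<le> int N + r" "int N + r \<le> int (2 * N)"
    by linarith+
  then show ?thesis
    by (simp add: qbinom_def divide_inverse)
qed

lemma qbinom_central_approx:
  assumes e: "0 < e" and r: "\<bar>r\<bar> \<le> int n" and N: "2 * n \<le> N" "N \<le> M"
  shows "vanishes_below (Suc n) (qpoch e M * inverse (qpoch e (nat (int N + r))) * inverse (qpoch e (nat (int N - r))) -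
    inverse (qpoch e N) :: 'a :: field fls)"
proof -
  have bound: "Suc n \<le> e * (x + 1)" if "n \<le> x" for x
  proof -
    have "1 * (x + 1) \<le> e * (x + 1)"
      using e by (intro mult_le_mono1) simp
    then show ?thesis using that by simp
  qed
  have "n \<le> nat (int N + r)" "n \<le> nat (int N - r)"
    using r N by linarith+
  then have "vanishes_below (Suc n) (inverse (qpoch e (nat (int N + r))) - inverse (qpoch e N) :: 'a fls)"
    "vanishes_below (Suc n) (inverse (qpoch e (nat (int N - r))) - inverse (qpoch e N) :: 'a fls)"
    using N by (auto intro!: inverse_qpoch_diff_vanishes_below e bound)
  moreover have "vanishes_below (Suc n) (qpoch e M - qpoch e N :: 'a fls)"
    using N by (auto intro!: qpoch_diff_vanishes_below' e bound)
  ultimately have "vanishes_below (Suc n) (qpoch e M * inverse (qpoch e (nat (int N + r))) * inverse (qpoch e (nat (int N - r))) -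
      qpoch e N * inverse (qpoch e N) * (inverse (qpoch e N) :: 'a fls))"
    using e by (intro vanishes_below_mult_diff vanishes_below_mult_left vanishes_below_qpoch vanishes_below_inverse_qpoch)
  moreover have "qpoch e N * inverse (qpoch e N) = (1 :: 'a fls)"
    using qpoch_nonzero[OF e, where 'a = 'a] by simp
  ultimately show ?thesis by simp
qed

lemma vanishes_below_0_theta_term: "vanishes_below 0 (theta_term c r :: 'a :: field fls)"
  by (rule vanishes_below_mono[OF _ vanishes_below_theta_term]) simp

lemma theta_binom_sum_approx:
  assumes e: "0 < e" and c: "1 \<le> c" and N: "2 * n \<le> N" "N \<le> M"
  shows "vanishes_below (Suc n) (qpoch e M / qpoch e (2 * N) * theta_binom_sum c e (2 * N) -
    theta_partial c N * inverse (qpoch e N) :: 'a :: field fls)"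
proof -
  let ?bracket = "\<lambda>r. qpoch e M * inverse (qpoch e (nat (int N + r))) * inverse (qpoch e (nat (int N - r))) -
    (inverse (qpoch e N) :: 'a fls)"
  have "qpoch e M / qpoch e (2 * N) * theta_binom_sum c e (2 * N) - theta_partial c N * inverse (qpoch e N) =
      (\<Sum>r = - int N..int N. theta_term c r * ?bracket r)"
    unfolding theta_binom_sum_even_eq_sum theta_partial_def sum_distrib_left sum_distrib_right
      sum_subtractf[symmetric]
  proof (rule sum.cong)
    fix r assume "r \<in> {- int N..int N}"
    then have "qbinom e (2 * N) (int N + r) = qpoch e (2 * N) * inverse (qpoch e (nat (int N + r))) *
        (inverse (qpoch e (nat (int N - r))) :: 'a fls)"
      by (intro qbinom_central_eq) auto
    then show "qpoch e M / qpoch e (2 * N) * (theta_term c r * qbinom e (2 * N) (int N + r)) -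
        theta_term c r * inverse (qpoch e N) = theta_term c r * ?bracket r"
      using qpoch_nonzero[OF e, where 'a = 'a] by (simp add: field_simps)
  qed simp
  also have "vanishes_below (Suc n) \<dots>"
  proof (rule vanishes_below_sum)
    fix r assume r: "r \<in> {- int N..int N}"
    show "vanishes_below (Suc n) (theta_term c r * ?bracket r)"
    proof (cases "\<bar>r\<bar> \<le> int n")
      case True
      then show ?thesis
        using N by (intro vanishes_below_mult_left vanishes_below_0_theta_term qbinom_central_approx e)
    next
      case False
      then have "Suc n \<le> nat (theta_exp c r)"
        using theta_exp_ge_abs[OF c, of r] by linarith
      then have "vanishes_below (Suc n) (theta_term c r :: 'a fls)"
        by (rule vanishes_below_mono[OF _ vanishes_below_theta_term])
      then show ?thesis
        using e by (intro vanishes_below_mult_right vanishes_below_diff vanishes_below_mult_left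
            vanishes_below_qpoch vanishes_below_inverse_qpoch)
    qed
  qed
  finally show ?thesis .
qed

lemma jacobi_product_approx:
  assumes "2 * n \<le> N"
  shows "vanishes_below (Suc n) (jacobi_product 3 N - theta_partial 3 N * inverse (qpoch 7 N) :: 'a :: field fls)"
proof -
  have "vanishes_below (Suc n) (qpoch 7 (2 * N) / qpoch 7 (2 * N) * theta_binom_sum 3 7 (2 * N) -
      theta_partial 3 N * inverse (qpoch 7 N) :: 'a fls)"
    by (rule theta_binom_sum_approx) (use assms in simp_all)
  moreover have "qpoch 7 (2 * N) / qpoch 7 (2 * N) = (1 :: 'a fls)"
    using qpoch_nonzero[of 7 "2 * N", where 'a = 'a] by simp
  ultimately show ?thesis
    using finite_jacobi_triple_product[of 3 N, where 'a = 'a] by simp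
qed

definition slater_partial_sum :: "nat \<Rightarrow> 'a :: field fls" where
  "slater_partial_sum N = (\<Sum>j\<le>N. fls_X ^ (2 * j^2) * odd_qpoch j / qpoch 2 (2 * j))"

lemma vanishes_below_odd_qpoch: "vanishes_below 0 (odd_qpoch j :: 'a :: field fls)"
  unfolding odd_qpoch_def
  by (intro vanishes_below_prod vanishes_below_diff vanishes_below_one vanishes_below_0_fls_X_power)

lemma slater_term_approx:
  assumes N: "2 * n \<le> N"
  shows "vanishes_below (Suc n) (fls_X ^ (2 * j^2) * odd_qpoch j / qpoch 2 (2 * j) *
    (qpoch 2 N * inverse (qpoch 2 (N - j)) - 1) :: 'a :: field fls)"
proof -
  have weight: "vanishes_below 0 (odd_qpoch j / (qpoch 2 (2 * j) :: 'a fls))"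
    unfolding divide_inverse by (intro vanishes_below_mult_left vanishes_below_odd_qpoch vanishes_below_inverse_qpoch) simp
  have bracket: "vanishes_below 0 (qpoch 2 N * inverse (qpoch 2 (N - j)) - (1 :: 'a fls))"
    by (intro vanishes_below_diff vanishes_below_mult_left vanishes_below_qpoch vanishes_below_inverse_qpoch) simp_all
  have split: "(fls_X ^ (2 * j^2) * odd_qpoch j / (qpoch 2 (2 * j) :: 'a fls)) * B = fls_X ^ (2 * j^2) * (odd_qpoch j / qpoch 2 (2 * j) * B)" for B
    by (simp add: mult_ac)
  show ?thesis
  proof (cases "n < 2 * j^2")
    case True
    then have "vanishes_below (Suc n) (fls_X ^ (2 * j^2) :: 'a fls)"
      by (intro vanishes_below_mono[OF _ vanishes_below_fls_X_power]) simp
    then show ?thesis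
      unfolding split using weight bracket by (intro vanishes_below_mult_right vanishes_below_mult_left)
  next
    case False
    moreover have "j \<le> 2 * j^2"
      by (cases j) (simp_all add: power2_eq_square)
    ultimately have "j \<le> n"
      by linarith
    then have "vanishes_below (Suc n) (qpoch 2 N - qpoch 2 (N - j) :: 'a fls)"
      using N by (intro qpoch_diff_vanishes_below') simp_all
    then have "vanishes_below (Suc n) ((qpoch 2 N - qpoch 2 (N - j)) * inverse (qpoch 2 (N - j)) :: 'a fls)"
      by (intro vanishes_below_mult_right vanishes_below_inverse_qpoch) simp_all
    moreover have "(qpoch 2 N - qpoch 2 (N - j)) * inverse (qpoch 2 (N - j)) =
        qpoch 2 N * inverse (qpoch 2 (N - j)) - (1 :: 'a fls)"
      using qpoch_nonzero[of 2 "N - j", where 'a = 'a] by (simp add: algebra_simps)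
    ultimately have bracket: "vanishes_below (Suc n) (qpoch 2 N * inverse (qpoch 2 (N - j)) - (1 :: 'a fls))"
      by simp
    show ?thesis
      unfolding split
      by (rule vanishes_below_mult_left[OF vanishes_below_0_fls_X_power vanishes_below_mult_left[OF weight bracket]])
  qed
qed

lemma bailey_sum_approx:
  assumes N: "2 * n \<le> N"
  shows "vanishes_below (Suc n) (Sum_any (\<lambda>j. bailey_weight 2 N j * odd_qpoch (nat j)) -
    (slater_partial_sum N :: 'a :: field fls))"
proof -
  let ?term = "\<lambda>j. fls_X ^ (2 * j^2) * odd_qpoch j / (qpoch 2 (2 * j) :: 'a fls)"
  have "Sum_any (\<lambda>j. bailey_weight 2 N j * odd_qpoch (nat j)) =
      (\<Sum>j \<in> int ` {..N}. bailey_weight 2 N j * (odd_qpoch (nat j) :: 'a fls))"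
  proof (rule Sum_any.expand_superset)
    show "{j. bailey_weight 2 N j * odd_qpoch (nat j) \<noteq> (0 :: 'a fls)} \<subseteq> int ` {..N}"
    proof
      fix j assume "j \<in> {j. bailey_weight 2 N j * odd_qpoch (nat j) \<noteq> (0 :: 'a fls)}"
      then have "0 \<le> j" "j \<le> int N"
        using bailey_weight_eq0[of j N 2, where 'a = 'a] by auto
      then show "j \<in> int ` {..N}"
        by (auto simp: image_iff intro!: bexI[of _ "nat j"])
    qed
  qed simp
  also have "\<dots> = (\<Sum>j\<le>N. bailey_weight 2 N (int j) * odd_qpoch j)"
    by (simp add: sum.reindex)
  also have "\<dots> = (\<Sum>j\<le>N. ?term j * (qpoch 2 N * inverse (qpoch 2 (N - j))))"
  proof (rule sum.cong)
    fix j assume "j \<in> {..N}"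
    then have "qbinom 2 N (int j) = qpoch 2 N / (qpoch 2 j * (qpoch 2 (N - j) :: 'a fls))"
      by (simp add: qbinom_of_nat)
    moreover have "fls_X powi (int 2 * int j ^ 2) = (fls_X ^ (2 * j ^ 2) :: 'a fls)"
      by (simp flip: power_int_of_nat)
    ultimately show "bailey_weight 2 N (int j) * odd_qpoch j = ?term j * (qpoch 2 N * inverse (qpoch 2 (N - j)))"
      unfolding bailey_weight_def using qpoch_nonzero[of 2 j, where 'a = 'a] by (simp add: field_simps)
  qed simp
  finally have "Sum_any (\<lambda>j. bailey_weight 2 N j * odd_qpoch (nat j)) - slater_partial_sum N =
      (\<Sum>j\<le>N. ?term j * (qpoch 2 N * inverse (qpoch 2 (N - j)) - 1))"
    by (simp add: slater_partial_sum_def sum_subtractf right_diff_distrib)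
  also have "vanishes_below (Suc n) \<dots>"
    by (intro vanishes_below_sum slater_term_approx N)
  finally show ?thesis .
qed

lemma vanishes_below_jacobi_product: "vanishes_below 0 (jacobi_product c N :: 'a :: field fls)"
  unfolding jacobi_product_def
  by (intro vanishes_below_prod vanishes_below_mult_left vanishes_below_diff vanishes_below_one
      vanishes_below_0_fls_X_power)

lemma slater_partial_sum_approx:
  assumes N: "2 * n \<le> N"
  shows "vanishes_below (Suc n) (slater_partial_sum N -
    qpoch 7 N * jacobi_product 3 N * inverse (qpoch 2 N) :: 'a :: field_char_0 fls)"
proof -
  have "vanishes_below (Suc n) (slater_partial_sum N - qpoch 2 N / qpoch 2 (2 * N) * (theta_binom_sum 3 2 (2 * N) :: 'a fls))"
    using bailey_sum_approx[OF N, where 'a = 'a] unfolding bailey_sum_odd_qpoch[where 'a = 'a]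
    by (rule vanishes_below_minus_commute)
  moreover have "vanishes_below (Suc n) (qpoch 2 N / qpoch 2 (2 * N) * theta_binom_sum 3 2 (2 * N) -
      theta_partial 3 N * inverse (qpoch 2 N) :: 'a fls)"
    using N by (intro theta_binom_sum_approx) simp_all
  moreover have "vanishes_below (Suc n) (theta_partial 3 N * inverse (qpoch 2 N) -
      qpoch 7 N * jacobi_product 3 N * inverse (qpoch 2 N) :: 'a fls)"
  proof -
    have "theta_partial 3 N * inverse (qpoch 2 N) - qpoch 7 N * jacobi_product 3 N * inverse (qpoch 2 N) =
        qpoch 7 N * (theta_partial 3 N * inverse (qpoch 7 N) - jacobi_product 3 N) * (inverse (qpoch 2 N) :: 'a fls)"
      using qpoch_nonzero[of 7 N, where 'a = 'a] qpoch_nonzero[of 2 N, where 'a = 'a] by (simp add: field_simps)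
    moreover have "vanishes_below (Suc n) (theta_partial 3 N * inverse (qpoch 7 N) - jacobi_product 3 N :: 'a fls)"
      using jacobi_product_approx[OF N] by (rule vanishes_below_minus_commute)
    ultimately show ?thesis
      using vanishes_below_qpoch[of 7 N, where 'a = 'a] vanishes_below_inverse_qpoch[of 2 N, where 'a = 'a]
      by (simp add: vanishes_below_mult_left vanishes_below_mult_right)
  qed
  ultimately show ?thesis
    by (blast intro: vanishes_below_diff_trans)
qed

definition distinct_parts_product :: "nat \<Rightarrow> 'a :: field fls" where
  "distinct_parts_product L = (\<Prod>k=1..L. 1 + fls_X ^ k)"

lemma distinct_parts_product_Suc:
  "distinct_parts_product (Suc L) = distinct_parts_product L * (1 + fls_X ^ Suc L)"
  by (simp add: distinct_parts_product_def prod.cl_ivl_Suc)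

lemma distinct_parts_product_mult_qpoch: "distinct_parts_product L * qpoch 1 L = qpoch 2 L"
proof (induction L)
  case (Suc L)
  have "(1 + fls_X ^ Suc L) * (1 - fls_X ^ Suc L) = (1 - fls_X ^ (2 * Suc L) :: 'a fls)"
    by (simp add: algebra_simps power_mult_distrib flip: power_add mult_2)
  with Suc show ?case
    by (simp add: distinct_parts_product_Suc qpoch_Suc) (metis mult.assoc mult.left_commute)
qed (simp add: distinct_parts_product_def)

lemma generating_functions_approx:
  assumes N: "2 * n \<le> N"
  shows "vanishes_below (Suc n) (distinct_parts_product (2 * N) * slater_partial_sum N -
    qpoch 7 N * jacobi_product 3 N * inverse (qpoch 1 (7 * N)) :: 'a :: field_char_0 fls)"
proof -
  let ?J = "qpoch 7 N * jacobi_product 3 N :: 'a fls"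
  have ne: "qpoch e L \<noteq> (0 :: 'a fls)" if "0 < e" for e L
    using qpoch_nonzero[OF that] .
  have D: "distinct_parts_product (2 * N) = qpoch 2 (2 * N) * (inverse (qpoch 1 (2 * N)) :: 'a fls)"
    using distinct_parts_product_mult_qpoch[of "2 * N", where 'a = 'a] ne[of 1 "2 * N"] by (simp add: field_simps)
  have approx: "vanishes_below (Suc n) (distinct_parts_product (2 * N) * (slater_partial_sum N - ?J * inverse (qpoch 2 N)))"
    unfolding D using N
    by (intro vanishes_below_mult_left slater_partial_sum_approx vanishes_below_qpoch vanishes_below_inverse_qpoch) simp_all
  have quotient: "vanishes_below (Suc n) (qpoch 2 (2 * N) * inverse (qpoch 2 N) - (1 :: 'a fls))"
  proof -
    have "vanishes_below (Suc n) ((qpoch 2 (2 * N) - qpoch 2 N) * (inverse (qpoch 2 N) :: 'a fls))"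
      using N by (intro vanishes_below_mult_right qpoch_diff_vanishes_below' vanishes_below_inverse_qpoch) simp_all
    then show ?thesis
      using ne[of 2 N] by (simp add: algebra_simps)
  qed
  have inverses: "vanishes_below (Suc n) (inverse (qpoch 1 (2 * N)) - (inverse (qpoch 1 (7 * N)) :: 'a fls))"
    using N by (intro inverse_qpoch_diff_vanishes_below) simp_all
  have J0: "vanishes_below 0 ?J" and quotient0: "vanishes_below 0 (qpoch 2 (2 * N) * (inverse (qpoch 2 N) :: 'a fls))"
    and inverse0: "vanishes_below 0 (inverse (qpoch 1 (7 * N)) :: 'a fls)"
    by (intro vanishes_below_mult_left vanishes_below_qpoch vanishes_below_jacobi_product
        vanishes_below_inverse_qpoch; simp)+
  have "vanishes_below (Suc n) (?J * (qpoch 2 (2 * N) * inverse (qpoch 2 N) * inverse (qpoch 1 (2 * N)) -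
      1 * inverse (qpoch 1 (7 * N))))"
    by (rule vanishes_below_mult_left[OF J0 vanishes_below_mult_diff[OF quotient inverses quotient0 inverse0]])
  with approx have "vanishes_below (Suc n) (distinct_parts_product (2 * N) * (slater_partial_sum N - ?J * inverse (qpoch 2 N)) +
      ?J * (qpoch 2 (2 * N) * inverse (qpoch 2 N) * inverse (qpoch 1 (2 * N)) - 1 * inverse (qpoch 1 (7 * N))))"
    by (rule vanishes_below_add)
  moreover have "distinct_parts_product (2 * N) * (slater_partial_sum N - ?J * inverse (qpoch 2 N)) +
      ?J * (qpoch 2 (2 * N) * inverse (qpoch 2 N) * inverse (qpoch 1 (2 * N)) - 1 * inverse (qpoch 1 (7 * N))) =
      distinct_parts_product (2 * N) * slater_partial_sum N - ?J * inverse (qpoch 1 (7 * N))"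
    unfolding D by (simp add: algebra_simps)
  ultimately show ?thesis by simp
qed

lemma distinct_parts_product_odd_qpoch:
  "distinct_parts_product (2 * j) * odd_qpoch j * qpoch 2 j = (qpoch 2 (2 * j) :: 'a :: field fls)"
proof (induction j)
  case (Suc j)
  have square: "(1 + fls_X ^ k) * (1 - fls_X ^ k) = (1 - fls_X ^ (2 * k) :: 'a fls)" for k
    by (simp add: algebra_simps flip: power_add mult_2)
  have "distinct_parts_product (2 * Suc j) * odd_qpoch (Suc j) * qpoch 2 (Suc j) =
      (distinct_parts_product (2 * j) * odd_qpoch j * qpoch 2 j) *
      ((1 + fls_X ^ (2 * j + 1)) * (1 - fls_X ^ (2 * j + 1))) * ((1 + fls_X ^ (2 * j + 2)) * (1 - (fls_X ^ (2 * j + 2) :: 'a fls)))"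
    by (simp add: distinct_parts_product_Suc odd_qpoch_def qpoch_Suc ac_simps)
  also have "\<dots> = qpoch 2 (2 * Suc j)"
    unfolding Suc square by (simp add: qpoch_Suc mult.assoc)
  finally show ?case .
qed (simp add: distinct_parts_product_def odd_qpoch_def)

definition C33_product :: "nat \<Rightarrow> 'a :: field fls" where
  "C33_product N = (\<Prod>k \<in> {k \<in> {1..7 * N}. k mod 7 \<notin> {0, 3, 4}}. 1 - fls_X ^ k)"

lemma C33_product_Suc:
  "C33_product (Suc N) = C33_product N *
    ((1 - fls_X ^ (7 * N + 1)) * (1 - fls_X ^ (7 * N + 2)) * (1 - fls_X ^ (7 * N + 5)) * (1 - fls_X ^ (7 * N + 6)))"
proof -
  have set: "{k \<in> {1..7 * Suc N}. k mod 7 \<notin> {0, 3, 4}} =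
      {k \<in> {1..7 * N}. k mod 7 \<notin> {0, 3, 4}} \<union> {7 * N + 1, 7 * N + 2, 7 * N + 5, 7 * N + 6}"
    by (auto simp: mod_add_left_eq[symmetric]) presburger+
  show ?thesis
    unfolding C33_product_def set by (subst prod.union_disjoint) (auto simp: mult.assoc)
qed

lemma qpoch_1_factorization: "qpoch 1 (7 * N) = qpoch 7 N * jacobi_product 3 N * (C33_product N :: 'a :: field fls)"
proof (induction N)
  case (Suc N)
  have "qpoch 1 (7 * Suc N) = qpoch 1 (7 * N) * ((1 - fls_X ^ (7 * N + 1)) * (1 - fls_X ^ (7 * N + 2)) *
      (1 - fls_X ^ (7 * N + 3)) * (1 - fls_X ^ (7 * N + 4)) * (1 - fls_X ^ (7 * N + 5)) *
      (1 - fls_X ^ (7 * N + 6)) * (1 - (fls_X ^ (7 * N + 7) :: 'a fls)))"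
    by (simp add: qpoch_Suc eval_nat_numeral mult.assoc)
  moreover have "qpoch 7 (Suc N) = qpoch 7 N * (1 - (fls_X ^ (7 * N + 7) :: 'a fls))"
    by (simp add: qpoch_Suc add.commute)
  moreover have "jacobi_product 3 (Suc N) = jacobi_product 3 N * ((1 - fls_X ^ (7 * N + 3)) * (1 - (fls_X ^ (7 * N + 4) :: 'a fls)))"
    by (simp add: jacobi_product_def algebra_simps)
  ultimately show ?case
    using Suc by (simp add: C33_product_Suc ac_simps)
qed (simp add: jacobi_product_def C33_product_def)

section \<open>Partitions with prescribed multiplicities\<close>

definition restricted_partitions :: "(nat \<Rightarrow> nat set) \<Rightarrow> nat set \<Rightarrow> nat \<Rightarrow> nat multiset set" where
  "restricted_partitions M T n = {p. set_mset p \<subseteq> T \<and> (\<forall>k\<in>T. count p k \<in> M k) \<and> sum_mset p = n}"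

definition multiplicity_series :: "(nat \<Rightarrow> nat set) \<Rightarrow> nat \<Rightarrow> rat fps" where
  "multiplicity_series M k = Abs_fps (\<lambda>i. if k dvd i \<and> i div k \<in> M k then 1 else 0)"

lemma size_le_sum_mset: "0 \<notin># p \<Longrightarrow> size p \<le> sum_mset (p :: nat multiset)"
proof (induction p)
  case (add x p)
  then show ?case by (cases x) auto
qed simp

lemma mem_le_sum_mset: "x \<in># p \<Longrightarrow> x \<le> sum_mset (p :: nat multiset)"
  by (auto dest: multi_member_split)

lemma finite_restricted_partitions:
  assumes "finite T" "0 \<notin> T"
  shows "finite (restricted_partitions M T n)"
proof (rule finite_subset)
  show "restricted_partitions M T n \<subseteq> (\<Union>s\<in>{0..n}. multisets_of_size T s)"
  proof
    fix p assume "p \<in> restricted_partitions M T n"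
    then have "set_mset p \<subseteq> T" "sum_mset p = n"
      by (auto simp: restricted_partitions_def)
    moreover from this have "size p \<le> n"
      using assms(2) size_le_sum_mset[of p] by auto
    ultimately show "p \<in> (\<Union>s\<in>{0..n}. multisets_of_size T s)"
      by (auto simp: multisets_of_size_def)
  qed
  show "finite (\<Union>s\<in>{0..n}. multisets_of_size T s)"
    using assms(1) by (intro finite_UN_I) auto
qed

lemma restricted_partitions_insert_bij:
  assumes a: "0 < a" "a \<notin> T"
  shows "bij_betw (\<lambda>(i, q). q + replicate_mset (i div a) a)
    (SIGMA i:{i \<in> {0..n}. a dvd i \<and> i div a \<in> M a}. restricted_partitions M T (n - i))
    (restricted_partitions M (insert a T) n)"
proof (rule bij_betw_byWitness[where f' = "\<lambda>p. (a * count p a, {#x \<in># p. x \<noteq> a#})"])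
  have split: "p = {#x \<in># p. x \<noteq> a#} + replicate_mset (count p a) a" for p
    by (metis multiset_partition add.commute filter_eq_replicate_mset)
  have absent: "count q a = 0" if "q \<in> restricted_partitions M T m" for q m
    using that a(2) by (auto simp: restricted_partitions_def count_eq_zero_iff)
  show "\<forall>x\<in>(SIGMA i:{i \<in> {0..n}. a dvd i \<and> i div a \<in> M a}. restricted_partitions M T (n - i)).
      (\<lambda>p. (a * count p a, {#x \<in># p. x \<noteq> a#})) ((\<lambda>(i, q). q + replicate_mset (i div a) a) x) = x"
  proof
    fix x assume "x \<in> (SIGMA i:{i \<in> {0..n}. a dvd i \<and> i div a \<in> M a}. restricted_partitions M T (n - i))"
    then obtain i q where iq: "x = (i, q)" "a dvd i" "q \<in> restricted_partitions M T (n - i)"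
      by auto
    have "{#x \<in># q. x \<noteq> a#} = q"
      using absent[OF iq(3)] by (auto simp: filter_mset_eq_conv count_eq_zero_iff)
    moreover have "a * (i div a) = i"
      using iq(2) by simp
    ultimately show "(\<lambda>p. (a * count p a, {#x \<in># p. x \<noteq> a#})) ((\<lambda>(i, q). q + replicate_mset (i div a) a) x) = x"
      using absent[OF iq(3)] iq(1) by simp
  qed
  show "\<forall>p\<in>restricted_partitions M (insert a T) n.
      (\<lambda>(i, q). q + replicate_mset (i div a) a) ((\<lambda>p. (a * count p a, {#x \<in># p. x \<noteq> a#})) p) = p"
    using a(1) split by auto
  show "(\<lambda>(i, q). q + replicate_mset (i div a) a) `
      (SIGMA i:{i \<in> {0..n}. a dvd i \<and> i div a \<in> M a}. restricted_partitions M T (n - i))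
      \<subseteq> restricted_partitions M (insert a T) n"
  proof
    fix y assume "y \<in> (\<lambda>(i, q). q + replicate_mset (i div a) a) `
      (SIGMA i:{i \<in> {0..n}. a dvd i \<and> i div a \<in> M a}. restricted_partitions M T (n - i))"
    then obtain i q where iq: "y = q + replicate_mset (i div a) a" "i \<le> n" "a dvd i" "i div a \<in> M a"
      "q \<in> restricted_partitions M T (n - i)"
      by auto
    have "a * (i div a) = i"
      using iq(3) by simp
    then show "y \<in> restricted_partitions M (insert a T) n"
      using iq absent[OF iq(5)] unfolding restricted_partitions_def by (auto simp: mult.commute)
  qed
  show "(\<lambda>p. (a * count p a, {#x \<in># p. x \<noteq> a#})) ` restricted_partitions M (insert a T) n
      \<subseteq> (SIGMA i:{i \<in> {0..n}. a dvd i \<and> i div a \<in> M a}. restricted_partitions M T (n - i))"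
  proof
    fix z assume "z \<in> (\<lambda>p. (a * count p a, {#x \<in># p. x \<noteq> a#})) ` restricted_partitions M (insert a T) n"
    then obtain p where z: "z = (a * count p a, {#x \<in># p. x \<noteq> a#})"
      and p: "p \<in> restricted_partitions M (insert a T) n"
      by auto
    have sum: "sum_mset p = sum_mset {#x \<in># p. x \<noteq> a#} + a * count p a"
      by (subst split) simp
    have "a * count p a \<in> {i \<in> {0..n}. a dvd i \<and> i div a \<in> M a}"
      using p sum a(1) by (auto simp: restricted_partitions_def)
    moreover have "{#x \<in># p. x \<noteq> a#} \<in> restricted_partitions M T (n - a * count p a)"
      using p sum a(2) by (auto simp: restricted_partitions_def)
    ultimately show "z \<in> (SIGMA i:{i \<in> {0..n}. a dvd i \<and> i div a \<in> M a}. restricted_partitions M T (n - i))"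
      using z by simp
  qed
qed

lemma card_restricted_partitions:
  assumes "finite T" "0 \<notin> T"
  shows "of_nat (card (restricted_partitions M T n)) = (\<Prod>k\<in>T. multiplicity_series M k) $ n"
  using assms
proof (induction T arbitrary: n rule: finite_induct)
  case empty
  have "restricted_partitions M {} n = (if n = 0 then {{#}} else {})"
    by (auto simp: restricted_partitions_def)
  then show ?case by simp
next
  case (insert a T)
  define I where "I = {i \<in> {0..n}. a dvd i \<and> i div a \<in> M a}"
  have a: "0 < a" and T: "0 \<notin> T"
    using insert by auto
  have "(\<Prod>k\<in>insert a T. multiplicity_series M k) $ n =
      (\<Sum>i\<in>{0..n}. (if a dvd i \<and> i div a \<in> M a then 1 else 0) * of_nat (card (restricted_partitions M T (n - i))))"
    using insert by (simp add: fps_mult_nth multiplicity_series_def insert.IH[OF T] atLeast0AtMost)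
  also have "\<dots> = (\<Sum>i\<in>{0..n}. if a dvd i \<and> i div a \<in> M a then of_nat (card (restricted_partitions M T (n - i))) else 0)"
    by (rule sum.cong) auto
  also have "\<dots> = (\<Sum>i\<in>I. of_nat (card (restricted_partitions M T (n - i))))"
    unfolding I_def by (rule sum.inter_filter[symmetric]) simp
  also have "\<dots> = of_nat (card (SIGMA i:I. restricted_partitions M T (n - i)))"
    by (simp add: card_SigmaI I_def finite_restricted_partitions[OF insert(1) T])
  also have "\<dots> = of_nat (card (restricted_partitions M (insert a T) n))"
    unfolding I_def using bij_betw_same_card[OF restricted_partitions_insert_bij[OF a insert(2)]] by simp
  finally show ?case ..
qed

lemma dvd_div_eq_iff: "0 < (k :: nat) \<Longrightarrow> (k dvd i \<and> i div k = m) \<longleftrightarrow> i = m * k"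
  by auto

lemma multiplicity_series_singleton: "0 < k \<Longrightarrow> M k = {m} \<Longrightarrow> multiplicity_series M k = fps_X ^ (m * k)"
  unfolding multiplicity_series_def by (rule fps_ext) (simp add: fps_X_power_nth dvd_div_eq_iff mult.commute)

lemma multiplicity_series_zero_one: "0 < k \<Longrightarrow> M k = {0, 1} \<Longrightarrow> multiplicity_series M k = 1 + fps_X ^ k"
proof (rule fps_ext)
  fix i assume k: "0 < k" "M k = {0, 1}"
  have "(k dvd i \<and> i div k \<in> {0, 1}) \<longleftrightarrow> (i = 0 \<or> i = k)"
    using dvd_div_eq_iff[OF k(1), of i 0] dvd_div_eq_iff[OF k(1), of i 1] by auto
  then show "multiplicity_series M k $ i = (1 + fps_X ^ k) $ i"
    unfolding multiplicity_series_def using k by (simp add: fps_X_power_nth)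
qed

lemma multiplicity_series_UNIV: "0 < k \<Longrightarrow> M k = UNIV \<Longrightarrow> multiplicity_series M k = inverse (1 - fps_X ^ k)"
proof -
  assume k: "0 < k" "M k = UNIV"
  have "(1 - fps_X ^ k) * multiplicity_series M k = 1"
  proof (rule fps_ext)
    fix i
    have "((1 - fps_X ^ k) * multiplicity_series M k) $ i =
        (multiplicity_series M k - fps_X ^ k * multiplicity_series M k) $ i"
      by (simp add: algebra_simps)
    also have "\<dots> = (1 :: rat fps) $ i"
    proof (cases "i < k")
      case True
      then have "k dvd i \<longleftrightarrow> i = 0" using k by (auto dest: dvd_imp_le)
      then show ?thesis using True k by (simp add: fps_X_power_mult_nth multiplicity_series_def)
    next
      case False
      then have "k dvd (i - k) \<longleftrightarrow> k dvd i" by (simp add: dvd_minus_self)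
      then show ?thesis using False k by (simp add: fps_X_power_mult_nth multiplicity_series_def)
    qed
    finally show "((1 - fps_X ^ k) * multiplicity_series M k) $ i = (1 :: rat fps) $ i" .
  qed
  then show ?thesis by (rule fps_inverse_unique[symmetric])
qed

section \<open>The partitions counted by A3 and C33\<close>

definition A3_multiplicities :: "nat \<Rightarrow> nat \<Rightarrow> nat set" where
  "A3_multiplicities j k = (if k \<le> 2 * j then if odd k then {2} else UNIV else {0, 1})"

definition C33_multiplicities :: "nat \<Rightarrow> nat set" where
  "C33_multiplicities k = (if k mod 7 \<in> {0, 3, 4} then {0} else UNIV)"

lemma partitions_parts_bounded:
  assumes "p \<in> partitions n" "n \<le> L"
  shows "set_mset p \<subseteq> {1..L}"
proof
  fix x assume "x \<in># p"
  with assms show "x \<in> {1..L}"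
    using mem_le_sum_mset[of x p] by (auto simp: partitions_def)
qed

lemma A3_cond_restricted_partitions:
  assumes p: "p \<in> partitions n" "A3_cond p" and N: "2 * n \<le> N"
  obtains j where "j \<le> N" "p \<in> restricted_partitions (A3_multiplicities j) {1..2 * N} n"
proof -
  obtain j where twice: "\<And>i. 1 \<le> i \<Longrightarrow> i \<le> j \<Longrightarrow> count p (2 * i - 1) = 2"
    and once: "\<And>k. k > 2 * j \<Longrightarrow> count p k \<le> 1"
    using p(2) by (auto simp: A3_cond_def)
  have jN: "j \<le> N"
  proof (cases "j = 0")
    case False
    then have "2 * j - 1 \<in># p"
      using twice[of j] False by (simp flip: count_greater_zero_iff)
    then have "2 * j - 1 \<le> n"
      using p(1) mem_le_sum_mset[of "2 * j - 1" p] by (simp add: partitions_def)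
    then show ?thesis using N by simp
  qed simp
  have multiplicities: "count p k \<in> A3_multiplicities j k" for k
  proof (cases "k \<le> 2 * j \<and> odd k")
    case True
    define i where "i = (k + 1) div 2"
    have "k = 2 * i - 1" "1 \<le> i" "i \<le> j"
      using True by (auto simp: i_def elim!: oddE)
    with True show ?thesis
      using twice by (simp add: A3_multiplicities_def)
  next
    case False
    then show ?thesis
      using once[of k] by (auto simp: A3_multiplicities_def)
  qed
  have "set_mset p \<subseteq> {1..2 * N}" "sum_mset p = n"
    using p(1) N partitions_parts_bounded[of p n "2 * N"] by (auto simp: partitions_def)
  then have "p \<in> restricted_partitions (A3_multiplicities j) {1..2 * N} n"
    by (simp add: restricted_partitions_def multiplicities)
  with jN show ?thesis
    by (rule that)
qed

lemma restricted_partitions_A3_cond: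
  assumes "p \<in> restricted_partitions (A3_multiplicities j) {1..2 * N} n" "j \<le> N"
  shows "p \<in> partitions n \<and> A3_cond p"
proof -
  have p: "set_mset p \<subseteq> {1..2 * N}" "\<And>k. k \<in> {1..2 * N} \<Longrightarrow> count p k \<in> A3_multiplicities j k" "sum_mset p = n"
    using assms(1) by (auto simp: restricted_partitions_def)
  have multiplicities: "count p k \<in> A3_multiplicities j k" if "k \<noteq> 0" for k
  proof (cases "k \<in> {1..2 * N}")
    case False
    with p(1) that have "count p k = 0" by (auto simp: count_eq_zero_iff)
    with False that assms(2) show ?thesis by (simp add: A3_multiplicities_def)
  qed (rule p(2))
  have "count p (2 * i - 1) = 2" if "1 \<le> i" "i \<le> j" for i
  proof -
    have "odd (2 * i - 1)" "2 * i - 1 \<noteq> 0" "2 * i - 1 \<le> 2 * j"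
      using that by presburger+
    then have "A3_multiplicities j (2 * i - 1) = {2}"
      unfolding A3_multiplicities_def by (simp only: if_True not_False_eq_True)
    then show ?thesis
      using multiplicities[of "2 * i - 1"] \<open>2 * i - 1 \<noteq> 0\<close> by simp
  qed
  moreover have "count p k \<le> 1" if "2 * j < k" for k
    using multiplicities[of k] that by (auto simp: A3_multiplicities_def)
  ultimately have "A3_cond p"
    unfolding A3_cond_def by blast
  moreover have "p \<in> partitions n"
    using p(1,3) by (auto simp: partitions_def)
  ultimately show ?thesis by simp
qed

lemma A3_restricted_partitions_disjoint:
  assumes "j < j'" "j' \<le> N"
  shows "restricted_partitions (A3_multiplicities j) {1..2 * N} n \<inter>
    restricted_partitions (A3_multiplicities j') {1..2 * N} n = {}"
proof (rule ccontr)
  assume "restricted_partitions (A3_multiplicities j) {1..2 * N} n \<inter>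
    restricted_partitions (A3_multiplicities j') {1..2 * N} n \<noteq> {}"
  then obtain p where "p \<in> restricted_partitions (A3_multiplicities j) {1..2 * N} n"
    "p \<in> restricted_partitions (A3_multiplicities j') {1..2 * N} n"
    by blast
  moreover have "2 * j + 1 \<in> {1..2 * N}"
    using assms by simp
  ultimately have "count p (2 * j + 1) \<in> A3_multiplicities j (2 * j + 1)"
    "count p (2 * j + 1) \<in> A3_multiplicities j' (2 * j + 1)"
    by (auto simp: restricted_partitions_def)
  then show False
    using assms by (auto simp: A3_multiplicities_def)
qed

lemma C33_partitions_eq:
  assumes "n \<le> 7 * N"
  shows "{p \<in> partitions n. \<forall>x\<in>#p. x mod 7 \<notin> {0, 3, 4}} = restricted_partitions C33_multiplicities {1..7 * N} n"
proof (intro set_eqI iffI)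
  fix p assume p: "p \<in> {p \<in> partitions n. \<forall>x\<in>#p. x mod 7 \<notin> {0, 3, 4}}"
  then have "set_mset p \<subseteq> {1..7 * N}"
    using assms partitions_parts_bounded[of p n "7 * N"] by simp
  with p show "p \<in> restricted_partitions C33_multiplicities {1..7 * N} n"
    by (auto simp: restricted_partitions_def partitions_def C33_multiplicities_def count_eq_zero_iff)
next
  fix p assume "p \<in> restricted_partitions C33_multiplicities {1..7 * N} n"
  then have p: "set_mset p \<subseteq> {1..7 * N}" "\<And>k. k \<in> {1..7 * N} \<Longrightarrow> count p k \<in> C33_multiplicities k"
    "sum_mset p = n"
    by (auto simp: restricted_partitions_def)
  have "x mod 7 \<notin> {0, 3, 4}" if "x \<in># p" for x
  proof -
    have "count p x \<in> C33_multiplicities x"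
      using p(1,2) that by blast
    moreover have "count p x \<noteq> 0"
      using that by simp
    ultimately show ?thesis
      by (auto simp: C33_multiplicities_def not_in_iff[symmetric] split: if_splits)
  qed
  with p(1,3) show "p \<in> {p \<in> partitions n. \<forall>x\<in>#p. x mod 7 \<notin> {0, 3, 4}}"
    by (auto simp: partitions_def)
qed

lemma fps_to_fls_prod: "fps_to_fls (prod f A) = (\<Prod>x\<in>A. fps_to_fls (f x))"
  by (induction A rule: infinite_finite_induct) (auto simp: fls_times_fps_to_fls)

lemma fps_to_fls_inverse_one_minus_X_power:
  "0 < k \<Longrightarrow> fps_to_fls (inverse (1 - fps_X ^ k :: 'a :: field fps)) = inverse (1 - fls_X ^ k)"
  by (simp add: fls_inverse_fps_to_fls[symmetric] fps_to_fls_power subdegree_eq_0)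

lemma fps_to_fls_A3_multiplicity_series:
  assumes "0 < k"
  shows "fps_to_fls (multiplicity_series (A3_multiplicities j) k) =
    (if k \<le> 2 * j then if odd k then fls_X ^ (2 * k) else inverse (1 - fls_X ^ k) else 1 + fls_X ^ k)"
  using assms
  by (simp add: multiplicity_series_singleton multiplicity_series_UNIV multiplicity_series_zero_one
      A3_multiplicities_def fps_to_fls_power fps_to_fls_inverse_one_minus_X_power)

lemma fps_to_fls_C33_multiplicity_series:
  assumes "0 < k"
  shows "fps_to_fls (multiplicity_series C33_multiplicities k) =
    (if k mod 7 \<in> {0, 3, 4} then 1 else inverse (1 - fls_X ^ k))"
  using assms
  by (simp add: multiplicity_series_singleton multiplicity_series_UNIV C33_multiplicities_def
      fps_to_fls_inverse_one_minus_X_power)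

lemma A3_small_parts_product:
  "(\<Prod>k=1..2 * j. if odd k then fls_X ^ (2 * k) else inverse (1 - fls_X ^ k)) =
    fls_X ^ (2 * j^2) * inverse (qpoch 2 j :: 'a :: field fls)"
proof (induction j)
  case (Suc j)
  have "{1..2 * Suc j} = insert (2 * j + 2) (insert (2 * j + 1) {1..2 * j})"
    by auto
  moreover have "2 * (Suc j)^2 = 2 * (2 * j + 1) + 2 * j^2"
    by (simp add: power2_eq_square)
  ultimately show ?case
    using Suc by (simp add: qpoch_Suc power_add ac_simps)
qed simp

lemma A3_series_product:
  assumes "j \<le> N"
  shows "fps_to_fls (\<Prod>k=1..2 * N. multiplicity_series (A3_multiplicities j) k) =
    distinct_parts_product (2 * N) * (fls_X ^ (2 * j^2) * odd_qpoch j / qpoch 2 (2 * j))"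
proof -
  have split: "prod f {1..2 * N} = prod f {1..2 * j} * prod f {2 * j + 1..2 * N}" for f :: "nat \<Rightarrow> rat fls"
    using prod.ub_add_nat[of 1 "2 * j" f "2 * N - 2 * j"] assms by simp
  have "fps_to_fls (\<Prod>k=1..2 * N. multiplicity_series (A3_multiplicities j) k) =
      (\<Prod>k=1..2 * j. if odd k then fls_X ^ (2 * k) else inverse (1 - fls_X ^ k)) * (\<Prod>k=2 * j + 1..2 * N. 1 + fls_X ^ k)"
    unfolding fps_to_fls_prod split
    by (intro arg_cong2[where f = "(*)"] prod.cong) (auto simp: fps_to_fls_A3_multiplicity_series)
  moreover have "distinct_parts_product (2 * N) = distinct_parts_product (2 * j) * (\<Prod>k=2 * j + 1..2 * N. 1 + (fls_X ^ k :: rat fls))"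
    unfolding distinct_parts_product_def by (rule split)
  moreover have "distinct_parts_product (2 * j) * odd_qpoch j * qpoch 2 j \<noteq> (0 :: rat fls)"
    unfolding distinct_parts_product_odd_qpoch by (rule qpoch_nonzero) simp
  then have "distinct_parts_product (2 * j) \<noteq> (0 :: rat fls)" "odd_qpoch j \<noteq> (0 :: rat fls)" "qpoch 2 j \<noteq> (0 :: rat fls)"
    by auto
  ultimately show ?thesis
    unfolding A3_small_parts_product distinct_parts_product_odd_qpoch[of j, symmetric]
    by (simp add: field_simps)
qed

lemma C33_series_product:
  "fps_to_fls (\<Prod>k=1..7 * N. multiplicity_series C33_multiplicities k) = inverse (C33_product N)"
proof -
  have "fps_to_fls (\<Prod>k=1..7 * N. multiplicity_series C33_multiplicities k) =
      (\<Prod>k \<in> {k \<in> {1..7 * N}. k mod 7 \<notin> {0, 3, 4}}. inverse (1 - fls_X ^ k))"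
    unfolding fps_to_fls_prod
    by (subst prod.inter_filter) (auto simp: fps_to_fls_C33_multiplicity_series intro!: prod.cong)
  then show ?thesis
    by (simp add: C33_product_def prod_inversef[symmetric])
qed

lemma A3_coefficient:
  assumes N: "2 * n \<le> N"
  shows "of_nat (A3 n) = fls_nth (distinct_parts_product (2 * N) * slater_partial_sum N :: rat fls) (int n)"
proof -
  let ?R = "\<lambda>j. restricted_partitions (A3_multiplicities j) {1..2 * N} n"
  have "{p \<in> partitions n. A3_cond p} = (\<Union>j\<le>N. ?R j)"
  proof (intro set_eqI iffI)
    fix p assume "p \<in> {p \<in> partitions n. A3_cond p}"
    then obtain j where "j \<le> N" "p \<in> ?R j"
      using A3_cond_restricted_partitions[OF _ _ N] by blast
    then show "p \<in> (\<Union>j\<le>N. ?R j)" by blast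
  next
    fix p assume "p \<in> (\<Union>j\<le>N. ?R j)"
    then show "p \<in> {p \<in> partitions n. A3_cond p}"
      using restricted_partitions_A3_cond by blast
  qed
  moreover have "?R i \<inter> ?R j = {}" if "i \<le> N" "j \<le> N" "i \<noteq> j" for i j
  proof (cases "i < j")
    case True
    then show ?thesis using A3_restricted_partitions_disjoint[of i j N n] that by simp
  next
    case False
    then have "j < i" using that by simp
    then show ?thesis using A3_restricted_partitions_disjoint[of j i N n] that by (simp add: Int_commute)
  qed
  then have "card (\<Union>j\<le>N. ?R j) = (\<Sum>j\<le>N. card (?R j))"
    by (intro card_UN_disjoint) (simp_all add: finite_restricted_partitions)
  ultimately have "of_nat (A3 n) = (\<Sum>j\<le>N. (\<Prod>k=1..2 * N. multiplicity_series (A3_multiplicities j) k) $ n)"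
    by (simp add: A3_def card_restricted_partitions)
  also have "\<dots> = (\<Sum>j\<le>N. fls_nth (fps_to_fls (\<Prod>k=1..2 * N. multiplicity_series (A3_multiplicities j) k)) (int n))"
    by simp
  also have "\<dots> = (\<Sum>j\<le>N. fls_nth (distinct_parts_product (2 * N) * (fls_X ^ (2 * j^2) * odd_qpoch j / qpoch 2 (2 * j))) (int n))"
    by (rule sum.cong[OF refl]) (simp only: A3_series_product atMost_iff)
  finally show ?thesis
    by (simp add: slater_partial_sum_def sum_distrib_left fls_nth_sum)
qed

lemma C33_coefficient:
  assumes "n \<le> 7 * N"
  shows "of_nat (C33 n) = fls_nth (qpoch 7 N * jacobi_product 3 N * inverse (qpoch 1 (7 * N)) :: rat fls) (int n)"
proof -
  have "of_nat (C33 n) = (\<Prod>k=1..7 * N. multiplicity_series C33_multiplicities k) $ n"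
    unfolding C33_def C33_partitions_eq[OF assms] by (rule card_restricted_partitions) auto
  also have "\<dots> = fls_nth (inverse (C33_product N)) (int n)"
    by (simp flip: C33_series_product)
  also have "inverse (C33_product N) = qpoch 7 N * jacobi_product 3 N * inverse (qpoch 1 (7 * N) :: rat fls)"
    using qpoch_nonzero[of 7 N, where 'a = rat] qpoch_nonzero[of 1 "7 * N", where 'a = rat]
    unfolding qpoch_1_factorization by (auto simp: field_simps)
  finally show ?thesis .
qed

theorem theorem5:
  fixes n :: nat
  shows "A3 n = C33 n"
proof -
  define N where "N = 2 * n"
  have "vanishes_below (Suc n) (distinct_parts_product (2 * N) * slater_partial_sum N -
      qpoch 7 N * jacobi_product 3 N * inverse (qpoch 1 (7 * N)) :: rat fls)"
    by (rule generating_functions_approx) (simp add: N_def)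
  moreover have "rat_of_nat (A3 n) = fls_nth (distinct_parts_product (2 * N) * slater_partial_sum N :: rat fls) (int n)"
    by (rule A3_coefficient) (simp add: N_def)
  moreover have "rat_of_nat (C33 n) = fls_nth (qpoch 7 N * jacobi_product 3 N * inverse (qpoch 1 (7 * N)) :: rat fls) (int n)"
    by (rule C33_coefficient) (simp add: N_def)
  ultimately have "rat_of_nat (A3 n) = rat_of_nat (C33 n)"
    by (simp add: vanishes_below_def)
  then show ?thesis by simp
qed

end
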